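(* Under the setting of the context, for every $T\ge0$, $$\sup_{0\le t\le T}\Bigl|\langle\bar M^{(m)}\rangle_t-m^{-2}\sum_{k=0}^{\lfloor m^2t\rfloor-1}\bar a(S_k/m)\Bigr|\longrightarrow0$$ in probability as $m\to+\infty$.
   Context: Let $d\ge1$, $(e_1,\dots,e_d)$ the canonical basis, $\mathcal V=\{\pm e_1,\dots,\pm e_d\}$. Let $E$ be a finite set and $P$ an irreducible and aperiodic stochastic matrix on $E$ with unique invariant probability $\mu$. For $k\in E$, $y\in\mathbb R^d$, $p(k,y,\cdot)$ is a probability on $\mathcal V$, with $y\mapsto p(k,y,u)$ twice continuously differentiable with bounded derivatives. Let $g(k,y)=\sum_uu\,p(k,y,u)$, assumed to satisfy $\sum_k\mu(k)g(k,y)=0$ for all $y$; $\alpha(i,y)=\sum_uuu^tp(i,y,u)$; $v(i,y)=\sum_{n\ge0}\sum_jP^n(i,j)g(j,y)$; $\bar a(y)=\sum_i\mu(i)[\alpha+gv^t+vg^t-2gg^t](i,y)$. For an integer $m\ge1$: $S_0=0$, $S_{n+1}=S_n+J_{n+1}$, $J_n\in\mathcal V$, and with $\mathcal F_n=\sigma(\xi_0,\dots,\xi_n,J_0,\dots,J_n)$, $\mathbb P(\xi_{n+1}=k,J_{n+1}=u\mid\mathcal F_n)=P(\xi_n,k)p(\xi_n,S_n/m,u)$. For $n\ge1$, $Y_n=J_n+v(\xi_n,S_n/m)-\mathbb E[J_n+v(\xi_n,S_n/m)\mid\mathcal F_{n-1}]$; $\bar M^{(m)}_t=m^{-1}\sum_{k=1}^{\lfloor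 m^2t\rfloor}Y_k$, a martingale with respect to $(\mathcal F_{\lfloor m^2t\rfloor})_t$, and $\langle\bar M^{(m)}\rangle$ its predictable bracket. *)

theory Defs
  imports "HOL-Probability.Probability"
begin

fun matpow :: "('e::finite \<Rightarrow> 'e \<Rightarrow> real) \<Rightarrow> nat \<Rightarrow> 'e \<Rightarrow> 'e \<Rightarrow> real" where
  "matpow P 0 i j = (if i = j then 1 else 0)"
| "matpow P (Suc n) i j = (\<Sum>k\<in>UNIV. matpow P n i k * P k j)"

definition stochastic :: "('e::finite \<Rightarrow> 'e \<Rightarrow> real) \<Rightarrow> bool" where
  "stochastic P \<longleftrightarrow> (\<forall>i j. 0 \<le> P i j) \<and> (\<forall>i. (\<Sum>j\<in>UNIV. P i j) = 1)"

definition irreducible_mat :: "('e::finite \<Rightarrow> 'e \<Rightarrow> real) \<Rightarrow> bool" where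
  "irreducible_mat P \<longleftrightarrow> (\<forall>i j. \<exists>n. 0 < matpow P n i j)"

definition aperiodic_mat :: "('e::finite \<Rightarrow> 'e \<Rightarrow> real) \<Rightarrow> bool" where
  "aperiodic_mat P \<longleftrightarrow> (\<forall>i. Gcd {n::nat. 0 < n \<and> 0 < matpow P n i i} = 1)"

definition invariant_prob :: "('e::finite \<Rightarrow> 'e \<Rightarrow> real) \<Rightarrow> ('e \<Rightarrow> real) \<Rightarrow> bool" where
  "invariant_prob P \<mu> \<longleftrightarrow> (\<forall>i. 0 \<le> \<mu> i) \<and> (\<Sum>i\<in>UNIV. \<mu> i) = 1
      \<and> (\<forall>j. (\<Sum>i\<in>UNIV. \<mu> i * P i j) = \<mu> j)"

definition Vsteps :: "(real^'d) set" where
  "Vsteps = {u. \<exists>a. u = axis a 1 \<or> u = - axis a 1}"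

definition outer :: "real^'d \<Rightarrow> real^'d \<Rightarrow> real^'d^'d" where
  "outer x y = (\<chi> a b. x $ a * y $ b)"

definition C2_bdd_deriv :: "(real^'d \<Rightarrow> real) \<Rightarrow> bool" where
  "C2_bdd_deriv f \<longleftrightarrow> (\<exists>Df D2f.
      (\<forall>y. (f has_derivative blinfun_apply (Df y)) (at y)) \<and>
      (\<forall>y. (Df has_derivative blinfun_apply (D2f y)) (at y)) \<and>
      continuous_on UNIV D2f \<and> bounded (range Df) \<and> bounded (range D2f))"

definition gdrift :: "('e \<Rightarrow> real^'d \<Rightarrow> real^'d \<Rightarrow> real) \<Rightarrow> 'e \<Rightarrow> real^'d \<Rightarrow> real^'d" where
  "gdrift p k y = (\<Sum>u\<in>Vsteps. p k y u *\<^sub>R u)"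

definition alpha :: "('e \<Rightarrow> real^'d \<Rightarrow> real^'d \<Rightarrow> real) \<Rightarrow> 'e \<Rightarrow> real^'d \<Rightarrow> real^'d^'d" where
  "alpha p i y = (\<Sum>u\<in>Vsteps. p i y u *\<^sub>R outer u u)"

definition vcorr :: "('e::finite \<Rightarrow> 'e \<Rightarrow> real) \<Rightarrow> ('e \<Rightarrow> real^'d \<Rightarrow> real^'d \<Rightarrow> real)
    \<Rightarrow> 'e \<Rightarrow> real^'d \<Rightarrow> real^'d" where
  "vcorr P p i y = (\<Sum>n. \<Sum>j\<in>UNIV. matpow P n i j *\<^sub>R gdrift p j y)"

definition abar :: "('e::finite \<Rightarrow> 'e \<Rightarrow> real) \<Rightarrow> ('e \<Rightarrow> real) \<Rightarrow> ('e \<Rightarrow> real^'d \<Rightarrow> real^'d \<Rightarrow> real)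
    \<Rightarrow> real^'d \<Rightarrow> real^'d^'d" where
  "abar P \<mu> p y = (\<Sum>i\<in>UNIV. \<mu> i *\<^sub>R
      (alpha p i y + outer (gdrift p i y) (vcorr P p i y) + outer (vcorr P p i y) (gdrift p i y)
       - 2 *\<^sub>R outer (gdrift p i y) (gdrift p i y)))"

definition Spos :: "(nat \<Rightarrow> 'w \<Rightarrow> real^'d) \<Rightarrow> nat \<Rightarrow> 'w \<Rightarrow> real^'d" where
  "Spos J n \<omega> = (\<Sum>i\<in>{1..n}. J i \<omega>)"

definition filt :: "'w measure \<Rightarrow> (nat \<Rightarrow> 'w \<Rightarrow> 'e) \<Rightarrow> (nat \<Rightarrow> 'w \<Rightarrow> real^'d) \<Rightarrow> nat \<Rightarrow> 'w measure" where
  "filt M \<xi> J n = sigma (space M)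
     ({\<xi> i -` A \<inter> space M | A i. i \<le> n} \<union> {J i -` B \<inter> space M | B i. i \<le> n \<and> B \<in> sets borel})"

definition vcond_exp :: "'w measure \<Rightarrow> 'w measure \<Rightarrow> ('w \<Rightarrow> real^'d) \<Rightarrow> 'w \<Rightarrow> real^'d" where
  "vcond_exp M F X \<omega> = (\<chi> a. real_cond_exp M F (\<lambda>w. X w $ a) \<omega>)"

definition Yinc :: "('e::finite \<Rightarrow> 'e \<Rightarrow> real) \<Rightarrow> ('e \<Rightarrow> real^'d \<Rightarrow> real^'d \<Rightarrow> real) \<Rightarrow> nat
    \<Rightarrow> 'w measure \<Rightarrow> (nat \<Rightarrow> 'w \<Rightarrow> 'e) \<Rightarrow> (nat \<Rightarrow> 'w \<Rightarrow> real^'d) \<Rightarrow> nat \<Rightarrow> 'w \<Rightarrow> real^'d" where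
  "Yinc P p m M \<xi> J n \<omega> =
     (let X = (\<lambda>w. J n w + vcorr P p (\<xi> n w) ((1 / real m) *\<^sub>R Spos J n w))
      in X \<omega> - vcond_exp M (filt M \<xi> J (n - 1)) X \<omega>)"

text \<open>Predictable bracket of \<open>M_t = m^{-1} \<Sum>_{k=1}^{\<lfloor>m^2 t\<rfloor>} Y_k\<close>:
  \<open>m^{-2} \<Sum>_{k=1}^{\<lfloor>m^2 t\<rfloor>} E[Y_k Y_k^t | F_{k-1}]\<close>.\<close>
definition bracket :: "('e::finite \<Rightarrow> 'e \<Rightarrow> real) \<Rightarrow> ('e \<Rightarrow> real^'d \<Rightarrow> real^'d \<Rightarrow> real) \<Rightarrow> nat
    \<Rightarrow> 'w measure \<Rightarrow> (nat \<Rightarrow> 'w \<Rightarrow> 'e) \<Rightarrow> (nat \<Rightarrow> 'w \<Rightarrow> real^'d) \<Rightarrow> real \<Rightarrow> 'w \<Rightarrow> real^'d^'d" where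
  "bracket P p m M \<xi> J t \<omega> = (1 / (real m)^2) *\<^sub>R
     (\<Sum>k\<in>{1..nat \<lfloor>(real m)^2 * t\<rfloor>}.
        (\<chi> a b. real_cond_exp M (filt M \<xi> J (k - 1))
                  (\<lambda>w. Yinc P p m M \<xi> J k w $ a * Yinc P p m M \<xi> J k w $ b) \<omega>))"

end

theory Submission
  imports Defs
begin

text \<open>
  Put \<open>X_{n+1} = J_{n+1} + v(\<xi>_{n+1}, S_{n+1}/m)\<close>, so that \<open>Y_{n+1} = X_{n+1} - E[X_{n+1} | F_n]\<close>.
  Given \<open>F_n\<close>, the pair \<open>(\<xi>_{n+1}, J_{n+1})\<close> has law \<open>P(\<xi>_n, j) p(\<xi>_n, S_n/m, u)\<close>, so
  \<open>E[Y_{n+1} Y_{n+1}^t | F_n]\<close> is the covariance \<open>step_cov (1/m)\<close> of \<open>u + v(j, y + u/m)\<close> under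
  this law, evaluated at \<open>(\<xi>_n, S_n/m)\<close>. As \<open>v\<close> is Lipschitz, \<open>step_cov (1/m) = step_cov 0 + O(1/m)\<close>,
  and because \<open>v\<close> solves the Poisson equation \<open>v = g + P v\<close>, the defect \<open>h = step_cov 0 - abar\<close>
  is centred under \<open>\<mu>\<close>. So for \<open>t \<le> T\<close> the deviation in the theorem is
  \<open>m^{-2} \<Sum>_{k<n} h(\<xi>_k, S_k/m) + O(T/m)\<close> with \<open>n = \<lfloor>m^2 t\<rfloor>\<close>.

  Solving \<open>w = h + P w\<close> turns \<open>\<Sum>_{k<n} h(\<xi>_k, S_k/m)\<close> into a martingale with bounded
  increments up to an error \<open>O(n/m + 1)\<close>. Its fourth moment is \<open>O(n^2)\<close>, so by Markov's inequality
  and a union bound over \<open>n \<le> m^2 T\<close> it exceeds \<open>\<epsilon> m^2\<close> with probability \<open>O(1/m^2)\<close>.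
  Both Poisson equations have bounded Lipschitz solutions \<open>\<Sum>_n P^n f\<close> because \<open>P^n\<close> converges
  to \<open>\<mu>\<close> geometrically fast: by irreducibility and aperiodicity some power of \<open>P\<close> has positive
  entries (Doeblin).
\<close>

section \<open>Mixing of the chain and the Poisson equation\<close>

lemma add_closed_multiple_mem:
  fixes S :: "nat set"
  assumes add: "\<And>a b. a \<in> S \<Longrightarrow> b \<in> S \<Longrightarrow> a + b \<in> S" and "0 \<in> S" and "a \<in> S"
  shows "q * a \<in> S"
  by (induction q) (use assms in auto)

lemma add_closed_Gcd_1_consecutive:
  fixes S :: "nat set"
  assumes add: "\<And>a b. a \<in> S \<Longrightarrow> b \<in> S \<Longrightarrow> a + b \<in> S" and S0: "0 \<in> S" and g: "Gcd S = 1"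
  obtains B where "B \<in> S" "Suc B \<in> S"
proof -
  define G where "G = {int a - int b | a b. a \<in> S \<and> b \<in> S}"
  have "\<not> S \<subseteq> {0}" using g Gcd_0_iff[of S] by auto
  then obtain s0 where s0: "s0 \<in> S" "s0 > 0" by auto
  have "int s0 \<in> G" unfolding G_def using s0 S0 by force
  then have ex: "\<exists>k::nat. k > 0 \<and> int k \<in> G" using s0 by blast
  \<comment> \<open>the least positive difference of two elements of \<open>S\<close> divides every element of \<open>S\<close>\<close>
  define d where "d = (LEAST k::nat. k > 0 \<and> int k \<in> G)"
  have dG: "d > 0 \<and> int d \<in> G" unfolding d_def by (rule LeastI_ex[OF ex])
  have dmin: "\<And>k. k > 0 \<Longrightarrow> int k \<in> G \<Longrightarrow> d \<le> k" unfolding d_def by (simp add: Least_le)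
  obtain A B where AB: "int d = int A - int B" "A \<in> S" "B \<in> S" using dG by (auto simp: G_def)
  have "d dvd s" if "s \<in> S" for s
  proof -
    define q where "q = s div d"
    define r where "r = s mod d"
    have "int s = int q * int d + int r"
      unfolding q_def r_def by (metis div_mult_mod_eq of_nat_add of_nat_mult)
    then have "int r = int (s + q * B) - int (q * A)" using AB(1) by (simp add: algebra_simps)
    moreover have "s + q * B \<in> S" "q * A \<in> S"
      using add add_closed_multiple_mem[OF add S0] AB that by blast+
    ultimately have "int r \<in> G" unfolding G_def by blast
    moreover have "r < d" using dG by (simp add: r_def)
    ultimately have "r = 0" using dmin by (meson not_less not_gr_zero)
    then show ?thesis by (simp add: r_def mod_eq_0_iff_dvd)
  qed
  then have "d dvd Gcd S" by (simp add: Gcd_greatest)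
  then have "d = 1" using g by simp
  then have "A = Suc B" using AB(1) by linarith
  then show ?thesis using that AB by blast
qed

lemma add_closed_consecutive_tail:
  fixes S :: "nat set"
  assumes add: "\<And>a b. a \<in> S \<Longrightarrow> b \<in> S \<Longrightarrow> a + b \<in> S" and S0: "0 \<in> S"
    and B: "B \<in> S" "Suc B \<in> S" and n: "B * B \<le> n"
  shows "n \<in> S"
proof -
  have "n mod B \<le> n div B" if "B > 0"
  proof -
    have "B \<le> n div B" using that div_le_mono[OF n, of B] by simp
    then show ?thesis using mod_less_divisor[OF that, of n] by linarith
  qed
  then have "n = (n div B - n mod B) * B + n mod B * Suc B"
    by (cases "B = 0") (simp_all add: algebra_simps diff_mult_distrib)
  also have "\<dots> \<in> S" using add add_closed_multiple_mem[OF add S0] B by blast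
  finally show ?thesis .
qed

lemma add_closed_Gcd_1_cofinite:
  fixes S :: "nat set"
  assumes add: "\<And>a b. a \<in> S \<Longrightarrow> b \<in> S \<Longrightarrow> a + b \<in> S" and g: "Gcd S = 1"
  shows "\<exists>N. \<forall>n\<ge>N. n \<in> S"
proof -
  have add0: "a + b \<in> insert 0 S" if "a \<in> insert 0 S" "b \<in> insert 0 S" for a b
    using that add by auto
  obtain B where "B \<in> insert 0 S" "Suc B \<in> insert 0 S"
    using add_closed_Gcd_1_consecutive[OF add0] g by auto
  then have "n \<in> S" if "Suc (B * B) \<le> n" for n
    using add_closed_consecutive_tail[OF add0, of B n] that by auto
  then show ?thesis by blast
qed

lemma matpow_add: "matpow P (a + b) i j = (\<Sum>k\<in>UNIV. matpow P a i k * matpow P b k j)"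
proof (induction b arbitrary: j)
  case 0
  then show ?case by (simp add: if_distrib cong: if_cong)
next
  case (Suc b)
  have "matpow P (a + Suc b) i j = (\<Sum>l\<in>UNIV. \<Sum>k\<in>UNIV. matpow P a i k * (matpow P b k l * P l j))"
    by (simp add: Suc sum_distrib_right mult.assoc)
  also have "\<dots> = (\<Sum>k\<in>UNIV. matpow P a i k * matpow P (Suc b) k j)"
    by (subst sum.swap) (simp add: sum_distrib_left)
  finally show ?case .
qed

lemma matpow_1: "matpow P (Suc 0) i j = P i j"
proof -
  have "matpow P (Suc 0) i j = (\<Sum>k\<in>UNIV. if i = k then P k j else 0)"
    unfolding matpow.simps by (rule sum.cong) auto
  then show ?thesis by simp
qed

lemma matpow_Suc_left: "matpow P (Suc n) i j = (\<Sum>k\<in>UNIV. P i k * matpow P n k j)"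
  using matpow_add[of P "Suc 0" n i j] by (simp only: matpow_1 add_Suc add_0)

locale ergodic_chain =
  fixes P :: "'e::finite \<Rightarrow> 'e \<Rightarrow> real" and \<mu> :: "'e \<Rightarrow> real"
  assumes stoch: "stochastic P" and irr: "irreducible_mat P" and aper: "aperiodic_mat P"
    and inv: "invariant_prob P \<mu>"
begin

lemma P_nonneg: "0 \<le> P i j" using stoch by (simp add: stochastic_def)
lemma P_row_sum: "(\<Sum>j\<in>UNIV. P i j) = 1" using stoch by (simp add: stochastic_def)
lemma mu_nonneg: "0 \<le> \<mu> i" using inv by (simp add: invariant_prob_def)
lemma mu_sum: "(\<Sum>i\<in>UNIV. \<mu> i) = 1" using inv by (simp add: invariant_prob_def)
lemma mu_invariant: "(\<Sum>i\<in>UNIV. \<mu> i * P i j) = \<mu> j" using inv by (simp add: invariant_prob_def)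

lemma mu_le_1: "\<mu> i \<le> 1"
  using member_le_sum[of i UNIV \<mu>] mu_nonneg mu_sum by simp

lemma matpow_nonneg: "0 \<le> matpow P n i j"
  by (induction n arbitrary: j) (auto intro!: sum_nonneg mult_nonneg_nonneg P_nonneg)

lemma matpow_row_sum: "(\<Sum>j\<in>UNIV. matpow P n i j) = 1"
proof (induction n)
  case (Suc n)
  have "(\<Sum>j\<in>UNIV. matpow P (Suc n) i j) = (\<Sum>k\<in>UNIV. \<Sum>j\<in>UNIV. matpow P n i k * P k j)"
    unfolding matpow.simps by (rule sum.swap)
  then show ?case by (simp add: sum_distrib_left[symmetric] P_row_sum Suc)
qed simp

lemma matpow_le_1: "matpow P n i j \<le> 1"
  using member_le_sum[of j UNIV "matpow P n i"] matpow_nonneg matpow_row_sum by simp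

lemma mu_matpow: "(\<Sum>i\<in>UNIV. \<mu> i * matpow P n i j) = \<mu> j"
proof (induction n arbitrary: j)
  case 0
  then show ?case by (simp add: if_distrib cong: if_cong)
next
  case (Suc n)
  have "(\<Sum>i\<in>UNIV. \<mu> i * matpow P (Suc n) i j) = (\<Sum>k\<in>UNIV. \<Sum>i\<in>UNIV. \<mu> i * matpow P n i k * P k j)"
    by (subst sum.swap) (simp add: sum_distrib_left mult.assoc)
  also have "\<dots> = (\<Sum>k\<in>UNIV. \<mu> k * P k j)"
    by (simp add: sum_distrib_right[symmetric] Suc)
  finally show ?case by (simp add: mu_invariant)
qed

lemma matpow_mult_le: "matpow P a i k * matpow P b k j \<le> matpow P (a + b) i j"
  unfolding matpow_add by (rule member_le_sum) (auto intro: mult_nonneg_nonneg matpow_nonneg)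

lemma matpow_diag_eventually_pos: "\<exists>N. \<forall>n\<ge>N. 0 < matpow P n i i"
proof -
  define S where "S = {n. 0 < n \<and> 0 < matpow P n i i}"
  have "a + b \<in> S" if "a \<in> S" "b \<in> S" for a b
    using that order.strict_trans2[OF _ matpow_mult_le, of 0 a i i b i]
    by (simp add: S_def)
  moreover have "Gcd S = 1" using aper by (simp add: aperiodic_mat_def S_def)
  ultimately obtain N where "\<forall>n\<ge>N. n \<in> S" using add_closed_Gcd_1_cofinite by blast
  then show ?thesis by (auto simp: S_def)
qed

lemma matpow_pos: "\<exists>N\<ge>1. \<forall>i j. 0 < matpow P N i j"
proof -
  obtain Nd where Nd: "\<And>i n. Nd i \<le> n \<Longrightarrow> 0 < matpow P n i i"
    using matpow_diag_eventually_pos by metis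
  obtain r where r: "\<And>i j. 0 < matpow P (r i j) i j"
    using irr unfolding irreducible_mat_def by metis
  define N where "N = Suc (Max (range Nd) + Max (range (case_prod r)))"
  have "0 < matpow P N i j" for i j
  proof -
    have "Nd i \<le> Max (range Nd)" "r i j \<le> Max (range (case_prod r))" by (auto intro!: Max_ge)
    then have le: "Nd i \<le> N - r i j" and le2: "r i j \<le> N" unfolding N_def by linarith+
    have "0 < matpow P (N - r i j) i i * matpow P (r i j) i j"
      using Nd[OF le] r by simp
    also have "\<dots> \<le> matpow P N i j" using matpow_mult_le[of "N - r i j" i i "r i j" j] le2 by simp
    finally show ?thesis .
  qed
  then show ?thesis by (intro exI[of _ N]) (auto simp: N_def)
qed

definition row_dist :: "nat \<Rightarrow> 'e \<Rightarrow> real" where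
  "row_dist n i = (\<Sum>j\<in>UNIV. \<bar>matpow P n i j - \<mu> j\<bar>)"

lemma row_dist_nonneg: "0 \<le> row_dist n i" by (simp add: row_dist_def sum_nonneg)

lemma row_dist_le_2: "row_dist n i \<le> 2"
proof -
  have "row_dist n i \<le> (\<Sum>j\<in>UNIV. matpow P n i j + \<mu> j)"
    unfolding row_dist_def by (rule sum_mono) (use matpow_nonneg mu_nonneg in \<open>auto simp: abs_le_iff\<close>)
  also have "\<dots> = 2" by (simp add: sum.distrib matpow_row_sum mu_sum)
  finally show ?thesis .
qed

text \<open>Doeblin's argument: if all entries of \<open>P^N\<close> are at least \<open>\<delta>\<close>, then the row \<open>P^N(i,\<cdot>)\<close>
  minus \<open>\<delta> \<mu>\<close> is a nonnegative vector of mass \<open>1 - \<delta>\<close>, and \<open>\<mu> P^n = \<mu>\<close>.\<close>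
lemma row_dist_contract:
  assumes c: "\<And>k. row_dist n k \<le> c" and Q: "\<And>i j. \<delta> \<le> matpow P N i j" and d0: "0 \<le> \<delta>"
  shows "row_dist (N + n) i \<le> (1 - \<delta>) * c"
proof -
  define w where "w k = matpow P N i k - \<delta> * \<mu> k" for k
  have w0: "0 \<le> w k" for k
    using Q[of i k] mult_left_mono[OF mu_le_1 d0, of k] by (simp add: w_def)
  have wsum: "(\<Sum>k\<in>UNIV. w k) = 1 - \<delta>"
    by (simp add: w_def sum_subtractf matpow_row_sum sum_distrib_left[symmetric] mu_sum)
  have e: "matpow P (N + n) i j - \<mu> j = (\<Sum>k\<in>UNIV. w k * (matpow P n k j - \<mu> j))" for j
  proof -
    have "(\<Sum>k\<in>UNIV. w k * (matpow P n k j - \<mu> j))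
        = (\<Sum>k\<in>UNIV. matpow P N i k * matpow P n k j) - (\<Sum>k\<in>UNIV. matpow P N i k) * \<mu> j
          - \<delta> * (\<Sum>k\<in>UNIV. \<mu> k * matpow P n k j) + \<delta> * (\<Sum>k\<in>UNIV. \<mu> k) * \<mu> j"
      by (simp add: w_def algebra_simps sum.distrib sum_subtractf sum_distrib_left sum_distrib_right)
    then show ?thesis
      by (simp add: matpow_add[symmetric] matpow_row_sum mu_matpow mu_sum)
  qed
  have "row_dist (N + n) i \<le> (\<Sum>j\<in>UNIV. \<Sum>k\<in>UNIV. w k * \<bar>matpow P n k j - \<mu> j\<bar>)"
    unfolding row_dist_def e
  proof (rule sum_mono)
    fix j
    show "\<bar>\<Sum>k\<in>UNIV. w k * (matpow P n k j - \<mu> j)\<bar> \<le> (\<Sum>k\<in>UNIV. w k * \<bar>matpow P n k j - \<mu> j\<bar>)"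
      using sum_abs[of "\<lambda>k. w k * (matpow P n k j - \<mu> j)" UNIV] by (simp add: abs_mult w0)
  qed
  also have "\<dots> = (\<Sum>k\<in>UNIV. w k * row_dist n k)"
    by (subst sum.swap) (simp add: row_dist_def sum_distrib_left)
  also have "\<dots> \<le> (\<Sum>k\<in>UNIV. w k * c)"
    by (rule sum_mono) (simp add: mult_left_mono c w0)
  also have "\<dots> = (1 - \<delta>) * c" by (simp add: sum_distrib_right[symmetric] wsum)
  finally show ?thesis .
qed

lemma row_dist_geometric:
  "\<exists>N \<rho>. N \<ge> 1 \<and> 0 \<le> \<rho> \<and> \<rho> < 1 \<and> (\<forall>n i. row_dist n i \<le> 2 * \<rho> ^ (n div N))"
proof -
  obtain N where N: "N \<ge> 1" "\<And>i j. 0 < matpow P N i j" using matpow_pos by blast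
  define \<delta> where "\<delta> = Min (range (\<lambda>(i,j). matpow P N i j))"
  have dle: "\<delta> \<le> matpow P N i j" for i j
  proof -
    have "matpow P N i j \<in> range (\<lambda>(i,j). matpow P N i j)" by (rule range_eqI[of _ _ "(i,j)"]) simp
    then show ?thesis unfolding \<delta>_def by (rule Min_le[rotated]) simp
  qed
  have "\<delta> \<in> range (\<lambda>(i,j). matpow P N i j)" unfolding \<delta>_def by (rule Min_in) auto
  then have dpos: "0 < \<delta>" using N(2) by auto
  have d1: "\<delta> \<le> 1" using dle[of undefined undefined] matpow_le_1[of N] by (meson order_trans)
  have main: "row_dist n i \<le> 2 * (1 - \<delta>) ^ (n div N)" for n i
  proof (induction n arbitrary: i rule: less_induct)
    case (less n)
    show ?case
    proof (cases "n < N")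
      case True
      then show ?thesis using row_dist_le_2 by simp
    next
      case False
      then obtain n' where n: "n = N + n'" using le_Suc_ex not_less by blast
      then have "\<And>k. row_dist n' k \<le> 2 * (1 - \<delta>) ^ (n' div N)" using less N(1) by simp
      from row_dist_contract[OF this dle] dpos
      have "row_dist (N + n') i \<le> (1 - \<delta>) * (2 * (1 - \<delta>) ^ (n' div N))" by simp
      moreover have "n div N = Suc (n' div N)" using N(1) n by simp
      ultimately show ?thesis using n by simp
    qed
  qed
  show ?thesis using main dpos d1 N(1) by (intro exI[of _ N] exI[of _ "1 - \<delta>"]) auto
qed

definition mixing_rate :: "nat \<Rightarrow> real" where "mixing_rate n = Max (range (row_dist n))"

lemma row_dist_le_mixing_rate: "row_dist n i \<le> mixing_rate n"
  unfolding mixing_rate_def by (rule Max_ge) auto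

lemma mixing_rate_nonneg: "0 \<le> mixing_rate n"
  using row_dist_nonneg[of n undefined] row_dist_le_mixing_rate[of n undefined] by linarith

lemma power_div_le_root_power:
  fixes r :: real
  assumes r: "0 < r" "r < 1" and N: "N \<ge> 1"
  shows "r ^ (n div N) \<le> (r powr (1 / real N)) ^ n / r"
proof -
  have "n mod N < N" "n div N * N + n mod N = n" "(n div N + 1) * N = n div N * N + N"
    using N by simp_all
  then have "n < (n div N + 1) * N" by linarith
  then have "real n < (real (n div N) + 1) * real N"
    by (metis of_nat_1 of_nat_add of_nat_less_iff of_nat_mult)
  then have "real n / real N \<le> real (n div N) + 1" using N by (simp add: field_simps)
  moreover have "r ^ (n div N) * r = r powr (real (n div N) + 1)"
    using r by (simp add: powr_add powr_realpow)
  ultimately have "r ^ (n div N) * r \<le> r powr (real n / real N)"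
    using r by (simp add: powr_mono')
  moreover have "(r powr (1 / real N)) ^ n = r powr (real n / real N)"
    using r by (simp add: powr_realpow[symmetric] powr_powr)
  ultimately show ?thesis using r by (simp add: field_simps)
qed

lemma summable_mixing_rate: "summable mixing_rate"
proof -
  obtain N \<rho> where N: "N \<ge> 1" "0 \<le> \<rho>" "\<rho> < 1" "\<And>n i. row_dist n i \<le> 2 * \<rho> ^ (n div N)"
    using row_dist_geometric by blast
  define r where "r = max \<rho> (1/2)"
  have r: "0 < r" "r < 1" "\<rho> \<le> r" using N by (auto simp: r_def)
  define \<theta> where "\<theta> = r powr (1 / real N)"
  have th: "0 \<le> \<theta>" "\<theta> < 1"
    using powr_less_mono2[of "1 / real N" r 1] r N(1) by (auto simp: \<theta>_def)
  have le: "mixing_rate n \<le> 2 * (\<theta> ^ n / r)" for n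
  proof -
    have "mixing_rate n \<in> range (row_dist n)" unfolding mixing_rate_def by (rule Max_in) auto
    then obtain i where "mixing_rate n = row_dist n i" by auto
    also have "\<dots> \<le> 2 * \<rho> ^ (n div N)" by (rule N(4))
    also have "\<dots> \<le> 2 * r ^ (n div N)" using N(2) r by (intro mult_left_mono power_mono) auto
    also have "\<dots> \<le> 2 * (\<theta> ^ n / r)"
      unfolding \<theta>_def using power_div_le_root_power[OF r(1,2) N(1), of n] by linarith
    finally show ?thesis .
  qed
  have "summable (\<lambda>n. 2 * (\<theta> ^ n / r))"
    using th by (intro summable_mult summable_divide summable_geometric) auto
  then show ?thesis
    by (rule summable_comparison_test'[where N=0]) (use mixing_rate_nonneg le in auto)
qed

definition Kmix :: real where "Kmix = suminf mixing_rate"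

lemma Kmix_nonneg: "0 \<le> Kmix"
  unfolding Kmix_def by (rule suminf_nonneg[OF summable_mixing_rate mixing_rate_nonneg])

definition matpow_apply :: "('e \<Rightarrow> 'v::real_normed_vector) \<Rightarrow> nat \<Rightarrow> 'e \<Rightarrow> 'v" where
  "matpow_apply f n i = (\<Sum>j\<in>UNIV. matpow P n i j *\<^sub>R f j)"

definition poisson :: "('e \<Rightarrow> 'v::real_normed_vector) \<Rightarrow> 'e \<Rightarrow> 'v" where
  "poisson f i = (\<Sum>n. matpow_apply f n i)"

definition centered :: "('e \<Rightarrow> 'v::real_normed_vector) \<Rightarrow> bool" where
  "centered f \<longleftrightarrow> (\<Sum>j\<in>UNIV. \<mu> j *\<^sub>R f j) = 0"

lemma norm_matpow_apply_le:
  assumes c: "centered f" and B: "\<And>j. norm (f j) \<le> B"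
  shows "norm (matpow_apply f n i) \<le> mixing_rate n * B"
proof -
  have B0: "0 \<le> B" using B norm_ge_zero order_trans by blast
  have "matpow_apply f n i = (\<Sum>j\<in>UNIV. (matpow P n i j - \<mu> j) *\<^sub>R f j)"
    using c unfolding centered_def matpow_apply_def by (simp add: scaleR_diff_left sum_subtractf)
  also have "norm \<dots> \<le> (\<Sum>j\<in>UNIV. norm ((matpow P n i j - \<mu> j) *\<^sub>R f j))"
    by (rule norm_sum)
  also have "\<dots> \<le> (\<Sum>j\<in>UNIV. \<bar>matpow P n i j - \<mu> j\<bar> * B)"
    by (rule sum_mono) (simp add: B mult_left_mono)
  also have "\<dots> = row_dist n i * B" by (simp add: row_dist_def sum_distrib_right)
  also have "\<dots> \<le> mixing_rate n * B" by (rule mult_right_mono[OF row_dist_le_mixing_rate B0])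
  finally show ?thesis .
qed

lemma summable_norm_matpow_apply:
  assumes c: "centered f"
  shows "summable (\<lambda>n. norm (matpow_apply f n i))"
proof -
  have B: "norm (f j) \<le> (\<Sum>j\<in>UNIV. norm (f j))" for j by (rule member_le_sum) auto
  show ?thesis
    by (rule summable_comparison_test'[where N=0 and g="\<lambda>n. mixing_rate n * (\<Sum>j\<in>UNIV. norm (f j))"])
      (auto intro: summable_mult2 summable_mixing_rate norm_matpow_apply_le[OF c B])
qed

lemma summable_matpow_apply:
  fixes f :: "'e \<Rightarrow> 'v::banach"
  shows "centered f \<Longrightarrow> summable (\<lambda>n. matpow_apply f n i)"
  by (rule summable_norm_cancel[OF summable_norm_matpow_apply])

lemma norm_poisson_le:
  fixes f :: "'e \<Rightarrow> 'v::banach"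
  assumes c: "centered f" and B: "\<And>j. norm (f j) \<le> B"
  shows "norm (poisson f i) \<le> Kmix * B"
proof -
  have "norm (poisson f i) \<le> (\<Sum>n. norm (matpow_apply f n i))"
    unfolding poisson_def by (rule summable_norm[OF summable_norm_matpow_apply[OF c]])
  also have "\<dots> \<le> (\<Sum>n. mixing_rate n * B)"
    by (rule suminf_le)
      (auto intro: norm_matpow_apply_le[OF c B] summable_norm_matpow_apply[OF c]
        summable_mult2 summable_mixing_rate)
  also have "\<dots> = Kmix * B" unfolding Kmix_def by (rule suminf_mult2[symmetric, OF summable_mixing_rate])
  finally show ?thesis .
qed

lemma centered_diff: "centered f \<Longrightarrow> centered g \<Longrightarrow> centered (\<lambda>j. f j - g j)"
  unfolding centered_def by (simp add: scaleR_diff_right sum_subtractf)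

lemma matpow_apply_diff: "matpow_apply (\<lambda>j. f j - g j) n i = matpow_apply f n i - matpow_apply g n i"
  unfolding matpow_apply_def by (simp add: scaleR_diff_right sum_subtractf)

lemma poisson_diff:
  fixes f g :: "'e \<Rightarrow> 'v::banach"
  assumes "centered f" "centered g"
  shows "poisson f i - poisson g i = poisson (\<lambda>j. f j - g j) i"
  unfolding poisson_def matpow_apply_diff by (rule suminf_diff) (auto intro: summable_matpow_apply assms)

lemma matpow_apply_Suc: "matpow_apply f (Suc n) i = (\<Sum>k\<in>UNIV. P i k *\<^sub>R matpow_apply f n k)"
proof -
  have "matpow_apply f (Suc n) i = (\<Sum>j\<in>UNIV. \<Sum>k\<in>UNIV. (P i k * matpow P n k j) *\<^sub>R f j)"
    unfolding matpow_apply_def matpow_Suc_left by (simp add: scaleR_sum_left)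
  also have "\<dots> = (\<Sum>k\<in>UNIV. \<Sum>j\<in>UNIV. (P i k * matpow P n k j) *\<^sub>R f j)" by (rule sum.swap)
  finally show ?thesis unfolding matpow_apply_def by (simp add: scaleR_sum_right)
qed

lemma poisson_equation:
  fixes f :: "'e \<Rightarrow> 'v::banach"
  assumes c: "centered f"
  shows "poisson f i = f i + (\<Sum>k\<in>UNIV. P i k *\<^sub>R poisson f k)"
proof -
  have "(\<Sum>n. matpow_apply f (Suc n) i) = (\<Sum>k\<in>UNIV. \<Sum>n. P i k *\<^sub>R matpow_apply f n k)"
    unfolding matpow_apply_Suc
    by (rule suminf_sum) (intro summable_scaleR_right summable_matpow_apply[OF c])
  also have "\<dots> = (\<Sum>k\<in>UNIV. P i k *\<^sub>R poisson f k)"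
    unfolding poisson_def by (simp add: suminf_scaleR_right summable_matpow_apply[OF c])
  finally have "poisson f i - matpow_apply f 0 i = (\<Sum>k\<in>UNIV. P i k *\<^sub>R poisson f k)"
    unfolding poisson_def using suminf_split_head[OF summable_matpow_apply[OF c]] by simp
  moreover have "matpow_apply f 0 i = (\<Sum>j\<in>UNIV. if i = j then f j else 0)"
    unfolding matpow_apply_def by (rule sum.cong) auto
  ultimately show ?thesis by (simp add: algebra_simps)
qed

end

section \<open>Bounded Lipschitz functions\<close>

definition bounded_lipschitz :: "('a::real_normed_vector \<Rightarrow> real) \<Rightarrow> bool" where
  "bounded_lipschitz f \<longleftrightarrow> (\<exists>B L. \<forall>x y. \<bar>f x\<bar> \<le> B \<and> \<bar>f x - f y\<bar> \<le> L * norm (x - y))"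

lemma bounded_lipschitzI:
  "(\<And>x. \<bar>f x\<bar> \<le> B) \<Longrightarrow> (\<And>x y. \<bar>f x - f y\<bar> \<le> L * norm (x - y)) \<Longrightarrow> bounded_lipschitz f"
  unfolding bounded_lipschitz_def by blast

lemma bounded_lipschitzE:
  assumes "bounded_lipschitz f"
  obtains B L where "0 \<le> B" "0 \<le> L" "\<And>x. \<bar>f x\<bar> \<le> B" "\<And>x y. \<bar>f x - f y\<bar> \<le> L * norm (x - y)"
proof -
  obtain B L where H: "\<And>x y. \<bar>f x\<bar> \<le> B \<and> \<bar>f x - f y\<bar> \<le> L * norm (x - y)"
    using assms unfolding bounded_lipschitz_def by blast
  have "\<bar>f x - f y\<bar> \<le> max L 0 * norm (x - y)" for x y
    using H[of x y] mult_right_mono[of L "max L 0" "norm (x - y)"] by simp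
  moreover have "0 \<le> B" using H[of 0 0] by linarith
  ultimately show ?thesis using that[of B "max L 0"] H by auto
qed

lemma bounded_lipschitz_const: "bounded_lipschitz (\<lambda>x. c)"
  by (rule bounded_lipschitzI[of _ "\<bar>c\<bar>" 0]) auto

lemma bounded_lipschitz_add:
  assumes "bounded_lipschitz f" "bounded_lipschitz g"
  shows "bounded_lipschitz (\<lambda>x. f x + g x)"
proof -
  obtain B1 L1 B2 L2 where f: "\<And>x. \<bar>f x\<bar> \<le> B1" "\<And>x y. \<bar>f x - f y\<bar> \<le> L1 * norm (x - y)"
    and g: "\<And>x. \<bar>g x\<bar> \<le> B2" "\<And>x y. \<bar>g x - g y\<bar> \<le> L2 * norm (x - y)"
    using assms by (metis bounded_lipschitzE)
  show ?thesis
  proof (rule bounded_lipschitzI[of _ "B1 + B2" "L1 + L2"])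
    show "\<bar>f x + g x\<bar> \<le> B1 + B2" for x using f(1)[of x] g(1)[of x] by linarith
    show "\<bar>f x + g x - (f y + g y)\<bar> \<le> (L1 + L2) * norm (x - y)" for x y
      using f(2)[of x y] g(2)[of x y] by (simp add: algebra_simps)
  qed
qed

lemma bounded_lipschitz_minus: "bounded_lipschitz f \<Longrightarrow> bounded_lipschitz (\<lambda>x. - f x)"
  unfolding bounded_lipschitz_def by (metis abs_minus_cancel minus_diff_minus abs_minus_commute)

lemma bounded_lipschitz_diff:
  "bounded_lipschitz f \<Longrightarrow> bounded_lipschitz g \<Longrightarrow> bounded_lipschitz (\<lambda>x. f x - g x)"
  using bounded_lipschitz_add[OF _ bounded_lipschitz_minus, of f g] by simp

lemma bounded_lipschitz_mult:
  assumes "bounded_lipschitz f" "bounded_lipschitz g"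
  shows "bounded_lipschitz (\<lambda>x. f x * g x)"
proof -
  obtain B1 L1 B2 L2 where f: "0 \<le> B1" "\<And>x. \<bar>f x\<bar> \<le> B1" "\<And>x y. \<bar>f x - f y\<bar> \<le> L1 * norm (x - y)"
    and g: "0 \<le> B2" "\<And>x. \<bar>g x\<bar> \<le> B2" "\<And>x y. \<bar>g x - g y\<bar> \<le> L2 * norm (x - y)"
    using assms by (metis bounded_lipschitzE)
  show ?thesis
  proof (rule bounded_lipschitzI[of _ "B1 * B2" "B1 * L2 + B2 * L1"])
    show "\<bar>f x * g x\<bar> \<le> B1 * B2" for x
      unfolding abs_mult by (rule mult_mono) (use f g in auto)
    show "\<bar>f x * g x - f y * g y\<bar> \<le> (B1 * L2 + B2 * L1) * norm (x - y)" for x y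
    proof -
      have "f x * g x - f y * g y = f x * (g x - g y) + g y * (f x - f y)" by (simp add: algebra_simps)
      then have "\<bar>f x * g x - f y * g y\<bar> \<le> \<bar>f x\<bar> * \<bar>g x - g y\<bar> + \<bar>g y\<bar> * \<bar>f x - f y\<bar>"
        by (simp add: abs_mult[symmetric] abs_triangle_ineq)
      also have "\<dots> \<le> B1 * (L2 * norm (x - y)) + B2 * (L1 * norm (x - y))"
        by (intro add_mono mult_mono) (use f g in auto)
      finally show ?thesis by (simp add: algebra_simps)
    qed
  qed
qed

lemma bounded_lipschitz_sum:
  "finite A \<Longrightarrow> (\<And>i. i \<in> A \<Longrightarrow> bounded_lipschitz (f i)) \<Longrightarrow> bounded_lipschitz (\<lambda>x. \<Sum>i\<in>A. f i x)"
  by (induction A rule: finite_induct) (simp_all add: bounded_lipschitz_const bounded_lipschitz_add)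

lemmas bounded_lipschitz_intros =
  bounded_lipschitz_const bounded_lipschitz_add bounded_lipschitz_diff bounded_lipschitz_mult
  bounded_lipschitz_sum

lemma bounded_lipschitz_uniform:
  fixes f :: "'i::finite \<Rightarrow> 'a::real_normed_vector \<Rightarrow> real"
  assumes "\<And>i. bounded_lipschitz (f i)"
  obtains B L where "\<And>i x. \<bar>f i x\<bar> \<le> B" "0 \<le> L" "\<And>i x y. \<bar>f i x - f i y\<bar> \<le> L * norm (x - y)"
proof -
  have "\<forall>i. \<exists>B L. \<forall>x y. \<bar>f i x\<bar> \<le> B \<and> \<bar>f i x - f i y\<bar> \<le> L * norm (x - y)"
    using assms unfolding bounded_lipschitz_def by blast
  then obtain B L where BL: "\<And>i x y. \<bar>f i x\<bar> \<le> B i \<and> \<bar>f i x - f i y\<bar> \<le> L i * norm (x - y)"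
    by metis
  have B0: "0 \<le> B i" for i using BL[of i 0 0] by linarith
  have "\<bar>f i x\<bar> \<le> (\<Sum>i\<in>UNIV. B i)" for i x
    using BL[of i x x] member_le_sum[of i UNIV B] B0 by force
  moreover have "\<bar>f i x - f i y\<bar> \<le> (\<Sum>i\<in>UNIV. max (L i) 0) * norm (x - y)" for i x y
  proof -
    have "L i \<le> (\<Sum>i\<in>UNIV. max (L i) 0)"
      using member_le_sum[of i UNIV "\<lambda>i. max (L i) 0"] by force
    then show ?thesis using BL[of i x y] mult_right_mono[of "L i" _ "norm (x - y)"] by force
  qed
  moreover have "0 \<le> (\<Sum>i\<in>UNIV. max (L i) 0)" by (rule sum_nonneg) simp
  ultimately show ?thesis using that by blast
qed

section \<open>The drift, its corrector and the effective covariance\<close>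

lemma finite_Vsteps: "finite (Vsteps :: (real^'d) set)"
proof -
  have "(Vsteps :: (real^'d) set) = range (\<lambda>a::'d. axis a (1::real)) \<union> range (\<lambda>a::'d. - axis a 1)"
    unfolding Vsteps_def by auto
  then show ?thesis by (metis finite_UnI finite_imageI finite_class.finite_UNIV)
qed

lemma norm_Vsteps: "u \<in> Vsteps \<Longrightarrow> norm u = 1"
  unfolding Vsteps_def by auto

lemma outer_nth [simp]: "outer x y $ a $ b = x $ a * y $ b"
  by (simp add: outer_def)

lemma C2_bdd_deriv_lipschitz:
  assumes "C2_bdd_deriv f"
  obtains L where "\<And>x y. \<bar>f x - f y\<bar> \<le> L * norm (x - y)"
proof -
  obtain Df where d: "\<And>y. (f has_derivative blinfun_apply (Df y)) (at y)" and b: "bounded (range Df)"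
    using assms unfolding C2_bdd_deriv_def by blast
  obtain B where B: "\<And>y. norm (Df y) \<le> B" using b unfolding bounded_iff by blast
  have "norm (f x - f y) \<le> B * norm (x - y)" for x y
    by (rule differentiable_bound[of UNIV f "\<lambda>y. blinfun_apply (Df y)"])
       (auto simp: d B norm_blinfun.rep_eq[symmetric])
  then show ?thesis using that by auto
qed

lemma C2_bdd_deriv_continuous: "C2_bdd_deriv f \<Longrightarrow> continuous_on UNIV f"
  unfolding C2_bdd_deriv_def
  by (meson continuous_at_imp_continuous_on has_derivative_continuous)

locale walk_model = ergodic_chain P \<mu> for P :: "'e::finite \<Rightarrow> 'e \<Rightarrow> real" and \<mu> +
  fixes p :: "'e \<Rightarrow> real^'d \<Rightarrow> real^'d \<Rightarrow> real"
  assumes p_nonneg: "\<And>k y u. 0 \<le> p k y u"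
    and p_sum: "\<And>k y. (\<Sum>u\<in>Vsteps. p k y u) = 1"
    and p_C2: "\<And>k u. u \<in> Vsteps \<Longrightarrow> C2_bdd_deriv (\<lambda>y. p k y u)"
    and gdrift_centered: "\<And>y. (\<Sum>k\<in>UNIV. \<mu> k *\<^sub>R gdrift p k y) = 0"
begin

lemma p_le_1: "u \<in> Vsteps \<Longrightarrow> p k y u \<le> 1"
  using member_le_sum[of u Vsteps "p k y"] p_nonneg finite_Vsteps p_sum by simp

lemma p_bounded_lipschitz: "u \<in> Vsteps \<Longrightarrow> bounded_lipschitz (\<lambda>y. p k y u)"
  by (rule C2_bdd_deriv_lipschitz[OF p_C2], assumption, rule bounded_lipschitzI)
     (use p_nonneg p_le_1 in auto)

lemma p_continuous: "u \<in> Vsteps \<Longrightarrow> continuous_on UNIV (\<lambda>y. p k y u)"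
  by (rule C2_bdd_deriv_continuous[OF p_C2])

lemma gdrift_nth: "gdrift p k y $ a = (\<Sum>u\<in>Vsteps. p k y u * u $ a)"
  by (simp add: gdrift_def)

lemma norm_gdrift_le: "norm (gdrift p k y) \<le> 1"
proof -
  have "norm (gdrift p k y) \<le> (\<Sum>u\<in>Vsteps. norm (p k y u *\<^sub>R u))"
    unfolding gdrift_def by (rule norm_sum)
  also have "\<dots> = (\<Sum>u\<in>Vsteps. p k y u)"
    by (rule sum.cong) (auto simp: norm_Vsteps p_nonneg)
  finally show ?thesis by (simp add: p_sum)
qed

lemma gdrift_bounded_lipschitz: "bounded_lipschitz (\<lambda>y. gdrift p k y $ a)"
  unfolding gdrift_nth by (intro bounded_lipschitz_intros p_bounded_lipschitz finite_Vsteps)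

lemma gdrift_lipschitz: "\<exists>L\<ge>0. \<forall>k x y. norm (gdrift p k x - gdrift p k y) \<le> L * norm (x - y)"
proof -
  have "bounded_lipschitz (case t of (k, a) \<Rightarrow> \<lambda>y. gdrift p k y $ a)" for t
    using gdrift_bounded_lipschitz by (cases t) auto
  then obtain B L where "\<And>t x. \<bar>(case t of (k, a) \<Rightarrow> \<lambda>y. gdrift p k y $ a) x\<bar> \<le> B" "0 \<le> L"
    and BL: "\<And>t x y. \<bar>(case t of (k, a) \<Rightarrow> \<lambda>y. gdrift p k y $ a) x
        - (case t of (k, a) \<Rightarrow> \<lambda>y. gdrift p k y $ a) y\<bar> \<le> L * norm (x - y)"
    by (rule bounded_lipschitz_uniform[of "\<lambda>t. case t of (k, a) \<Rightarrow> \<lambda>y. gdrift p k y $ a"]) blast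
  have L: "\<bar>gdrift p k x $ a - gdrift p k y $ a\<bar> \<le> L * norm (x - y)" for k a x y
    using BL[of "(k, a)" x y] by simp
  have "norm (gdrift p k x - gdrift p k y) \<le> (\<Sum>a\<in>UNIV. \<bar>(gdrift p k x - gdrift p k y) $ a\<bar>)"
    for k x y by (rule norm_le_l1_cart)
  also have "\<dots> k x y \<le> (\<Sum>a\<in>(UNIV::'d set). L * norm (x - y))" for k x y
    by (rule sum_mono) (simp add: L)
  finally show ?thesis using \<open>0 \<le> L\<close> by (intro exI[of _ "CARD('d) * L"]) (simp add: mult.assoc)
qed

definition Lg :: real where
  "Lg = (SOME L. 0 \<le> L \<and> (\<forall>k x y. norm (gdrift p k x - gdrift p k y) \<le> L * norm (x - y)))"

lemma Lg: "0 \<le> Lg" "norm (gdrift p k x - gdrift p k y) \<le> Lg * norm (x - y)"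
  using someI_ex[OF gdrift_lipschitz] unfolding Lg_def[symmetric] by auto

lemma centered_gdrift: "centered (\<lambda>k. gdrift p k y)"
  unfolding centered_def by (rule gdrift_centered)

lemma vcorr_eq_poisson: "vcorr P p i y = poisson (\<lambda>k. gdrift p k y) i"
  unfolding vcorr_def poisson_def matpow_apply_def by simp

lemma vcorr_equation: "vcorr P p i y = gdrift p i y + (\<Sum>k\<in>UNIV. P i k *\<^sub>R vcorr P p k y)"
  unfolding vcorr_eq_poisson by (rule poisson_equation[OF centered_gdrift])

lemma norm_vcorr_le: "norm (vcorr P p i y) \<le> Kmix"
  unfolding vcorr_eq_poisson using norm_poisson_le[OF centered_gdrift norm_gdrift_le] by simp

lemma vcorr_lipschitz: "norm (vcorr P p i x - vcorr P p i y) \<le> (Kmix * Lg) * norm (x - y)"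
proof -
  have "vcorr P p i x - vcorr P p i y = poisson (\<lambda>k. gdrift p k x - gdrift p k y) i"
    unfolding vcorr_eq_poisson by (rule poisson_diff[OF centered_gdrift centered_gdrift])
  also have "norm \<dots> \<le> Kmix * (Lg * norm (x - y))"
    by (rule norm_poisson_le) (auto intro: centered_diff centered_gdrift Lg)
  finally show ?thesis by (simp add: mult.assoc)
qed

lemma vcorr_continuous: "continuous_on UNIV (\<lambda>y. vcorr P p i y)"
proof -
  have "(Kmix * Lg)-lipschitz_on UNIV (\<lambda>y. vcorr P p i y)"
    by (intro lipschitz_onI) (auto simp: dist_norm vcorr_lipschitz Kmix_nonneg Lg)
  then show ?thesis by (rule lipschitz_on_continuous_on)
qed

lemma vcorr_bounded_lipschitz: "bounded_lipschitz (\<lambda>y. vcorr P p i y $ a)"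
proof (rule bounded_lipschitzI[of _ Kmix "Kmix * Lg"])
  show "\<bar>vcorr P p i x $ a\<bar> \<le> Kmix" for x
    using component_le_norm_cart[of "vcorr P p i x" a] norm_vcorr_le[of i x] by linarith
  show "\<bar>vcorr P p i x $ a - vcorr P p i y $ a\<bar> \<le> Kmix * Lg * norm (x - y)" for x y
    using component_le_norm_cart[of "vcorr P p i x - vcorr P p i y" a] vcorr_lipschitz[of i x y] by simp
qed

lemma alpha_nth: "alpha p i y $ a $ b = (\<Sum>u\<in>Vsteps. p i y u * (u $ a * u $ b))"
  by (simp add: alpha_def)

lemma abar_nth: "abar P \<mu> p y $ a $ b = (\<Sum>i\<in>UNIV. \<mu> i * (alpha p i y $ a $ b
   + gdrift p i y $ a * vcorr P p i y $ b + vcorr P p i y $ a * gdrift p i y $ b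
   - 2 * (gdrift p i y $ a * gdrift p i y $ b)))"
  by (simp add: abar_def)

lemma alpha_bounded_lipschitz: "bounded_lipschitz (\<lambda>y. alpha p i y $ a $ b)"
  unfolding alpha_nth by (intro bounded_lipschitz_intros p_bounded_lipschitz finite_Vsteps)

lemma abar_bounded_lipschitz: "bounded_lipschitz (\<lambda>y. abar P \<mu> p y $ a $ b)"
  unfolding abar_nth
  by (intro bounded_lipschitz_intros alpha_bounded_lipschitz gdrift_bounded_lipschitz
      vcorr_bounded_lipschitz) auto

end

section \<open>The one-step covariance of the corrected walk\<close>

text \<open>The algebra behind \<open>step_cov_0\<close>: \<open>w = P(i,\<cdot>)\<close>, \<open>Va\<close>, \<open>Vb\<close> are components of the corrector \<open>v\<close>
  and \<open>ga\<close>, \<open>gb\<close> those of the drift, related by \<open>P v = v - g\<close>.\<close>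
lemma kernel_cov_identity:
  fixes w Va Vb :: "'e::finite \<Rightarrow> real"
  assumes w1: "(\<Sum>j\<in>UNIV. w j) = 1" and pa: "(\<Sum>j\<in>UNIV. w j * Va j) = va - ga"
    and pb: "(\<Sum>j\<in>UNIV. w j * Vb j) = vb - gb"
  shows "(\<Sum>j\<in>UNIV. w j * (A + (Va j - va) * gb + ga * (Vb j - vb) + (Va j - va) * (Vb j - vb)))
    = A - 2 * (ga * gb) + ga * vb + va * gb + (\<Sum>j\<in>UNIV. w j * (Va j * Vb j)) - va * vb"
proof -
  have "(\<Sum>j\<in>UNIV. w j * (A + (Va j - va) * gb + ga * (Vb j - vb) + (Va j - va) * (Vb j - vb)))
    = (A - va * gb - ga * vb + va * vb) * (\<Sum>j\<in>UNIV. w j) + (gb - vb) * (\<Sum>j\<in>UNIV. w j * Va j)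
      + (ga - va) * (\<Sum>j\<in>UNIV. w j * Vb j) + (\<Sum>j\<in>UNIV. w j * (Va j * Vb j))"
    by (simp add: algebra_simps sum.distrib sum_distrib_left sum_subtractf)
  then show ?thesis unfolding w1 pa pb by (simp add: algebra_simps)
qed

lemma abs_component_prod_diff_le:
  fixes X Y :: "real^'d"
  assumes X: "norm X \<le> R" and Y: "norm Y \<le> R" and XY: "norm (X - Y) \<le> e"
  shows "\<bar>X $ a * X $ b - Y $ a * Y $ b\<bar> \<le> 2 * R * e"
proof -
  have "X $ a * X $ b - Y $ a * Y $ b = (X - Y) $ a * X $ b + Y $ a * (X - Y) $ b"
    by (simp add: algebra_simps)
  then have "\<bar>X $ a * X $ b - Y $ a * Y $ b\<bar> \<le> \<bar>(X - Y) $ a\<bar> * \<bar>X $ b\<bar> + \<bar>Y $ a\<bar> * \<bar>(X - Y) $ b\<bar>"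
    by (metis abs_mult abs_triangle_ineq)
  also have "\<dots> \<le> e * R + R * e"
    using component_le_norm_cart[of "X - Y" a] component_le_norm_cart[of "X - Y" b]
      component_le_norm_cart[of X b] component_le_norm_cart[of Y a] X Y XY
    by (intro add_mono mult_mono) auto
  finally show ?thesis by simp
qed

context walk_model
begin

text \<open>With \<open>s = 1/m\<close>, \<open>corr_step s j u y\<close> is \<open>J_{n+1} + v(\<xi>_{n+1}, S_{n+1}/m)\<close> on the event
  \<open>\<xi>_{n+1} = j\<close>, \<open>J_{n+1} = u\<close>, \<open>S_n/m = y\<close>; \<open>step_mean\<close> and \<open>step_cov\<close> are its conditional mean
  and covariance given \<open>\<xi>_n = i\<close>.\<close>
definition corr_step :: "real \<Rightarrow> 'e \<Rightarrow> real^'d \<Rightarrow> real^'d \<Rightarrow> real^'d" where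
  "corr_step s j u y = u + vcorr P p j (y + s *\<^sub>R u)"

definition step_mean :: "real \<Rightarrow> 'e \<Rightarrow> real^'d \<Rightarrow> real^'d" where
  "step_mean s i y = (\<Sum>j\<in>UNIV. \<Sum>u\<in>Vsteps. (P i j * p i y u) *\<^sub>R corr_step s j u y)"

definition step_cov :: "real \<Rightarrow> 'e \<Rightarrow> real^'d \<Rightarrow> 'd \<Rightarrow> 'd \<Rightarrow> real" where
  "step_cov s i y a b = (\<Sum>j\<in>UNIV. \<Sum>u\<in>Vsteps. P i j * p i y u *
      ((corr_step s j u y - step_mean s i y) $ a * (corr_step s j u y - step_mean s i y) $ b))"

definition cov_defect :: "'e \<Rightarrow> real^'d \<Rightarrow> 'd \<Rightarrow> 'd \<Rightarrow> real" where
  "cov_defect i y a b = step_cov 0 i y a b - abar P \<mu> p y $ a $ b"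

lemma kernel_weights_sum: "(\<Sum>j\<in>UNIV. \<Sum>u\<in>Vsteps. P i j * p i y u) = 1"
  by (simp add: sum_distrib_left[symmetric] p_sum P_row_sum)

lemma abs_kernel_avg_le:
  assumes "\<And>j u. u \<in> Vsteps \<Longrightarrow> \<bar>F j u\<bar> \<le> B"
  shows "\<bar>\<Sum>j\<in>UNIV. \<Sum>u\<in>Vsteps. P i j * p i y u * F j u\<bar> \<le> B"
proof -
  have "\<bar>\<Sum>j\<in>UNIV. \<Sum>u\<in>Vsteps. P i j * p i y u * F j u\<bar> \<le> (\<Sum>j\<in>UNIV. \<Sum>u\<in>Vsteps. \<bar>P i j * p i y u * F j u\<bar>)"
    by (rule order.trans[OF sum_abs sum_mono[OF sum_abs]])
  also have "\<dots> \<le> (\<Sum>j\<in>UNIV. \<Sum>u\<in>Vsteps. P i j * p i y u * B)"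
    by (intro sum_mono) (auto simp: abs_mult P_nonneg p_nonneg intro!: mult_left_mono assms)
  also have "\<dots> = B" by (simp add: sum_distrib_right[symmetric] kernel_weights_sum)
  finally show ?thesis .
qed

lemma norm_kernel_avg_le:
  fixes F :: "'e \<Rightarrow> real^'d \<Rightarrow> 'v::real_normed_vector"
  assumes "\<And>j u. u \<in> Vsteps \<Longrightarrow> norm (F j u) \<le> B"
  shows "norm (\<Sum>j\<in>UNIV. \<Sum>u\<in>Vsteps. (P i j * p i y u) *\<^sub>R F j u) \<le> B"
proof -
  have "norm (\<Sum>j\<in>UNIV. \<Sum>u\<in>Vsteps. (P i j * p i y u) *\<^sub>R F j u)
      \<le> (\<Sum>j\<in>UNIV. \<Sum>u\<in>Vsteps. norm ((P i j * p i y u) *\<^sub>R F j u))"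
    by (rule order.trans[OF norm_sum sum_mono[OF norm_sum]])
  also have "\<dots> \<le> (\<Sum>j\<in>UNIV. \<Sum>u\<in>Vsteps. P i j * p i y u * B)"
    by (intro sum_mono) (auto simp: P_nonneg p_nonneg intro!: mult_left_mono assms)
  also have "\<dots> = B" by (simp add: sum_distrib_right[symmetric] kernel_weights_sum)
  finally show ?thesis .
qed

lemma step_mean_0: "step_mean 0 i y = vcorr P p i y"
proof -
  have "(\<Sum>j\<in>UNIV. \<Sum>u\<in>Vsteps. (P i j * p i y u) *\<^sub>R u) = (\<Sum>j\<in>UNIV. P i j *\<^sub>R gdrift p i y)"
    unfolding gdrift_def by (simp add: scaleR_sum_right)
  also have "\<dots> = gdrift p i y" by (simp add: scaleR_sum_left[symmetric] P_row_sum)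
  finally have "(\<Sum>j\<in>UNIV. \<Sum>u\<in>Vsteps. (P i j * p i y u) *\<^sub>R u) = gdrift p i y" .
  moreover have "(\<Sum>j\<in>UNIV. \<Sum>u\<in>Vsteps. (P i j * p i y u) *\<^sub>R vcorr P p j y)
      = (\<Sum>j\<in>UNIV. P i j *\<^sub>R vcorr P p j y)"
    by (simp add: scaleR_sum_left[symmetric] sum_distrib_left[symmetric] p_sum)
  ultimately show ?thesis
    unfolding step_mean_def corr_step_def vcorr_equation[of i y]
    by (simp add: scaleR_add_right sum.distrib)
qed

lemma moment_shifted:
  "(\<Sum>u\<in>Vsteps. p i y u * ((u $ a + ca) * (u $ b + cb)))
   = alpha p i y $ a $ b + ca * gdrift p i y $ b + gdrift p i y $ a * cb + ca * cb"
proof -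
  have "(\<Sum>u\<in>Vsteps. p i y u * ((u $ a + ca) * (u $ b + cb)))
     = (\<Sum>u\<in>Vsteps. p i y u * (u $ a * u $ b)) + ca * (\<Sum>u\<in>Vsteps. p i y u * u $ b)
      + (\<Sum>u\<in>Vsteps. p i y u * u $ a) * cb + ca * cb * (\<Sum>u\<in>Vsteps. p i y u)"
    by (simp add: algebra_simps sum.distrib sum_distrib_left sum_distrib_right)
  then show ?thesis by (simp add: alpha_nth gdrift_nth p_sum)
qed

lemma P_vcorr_nth: "(\<Sum>j\<in>UNIV. P i j * vcorr P p j y $ a) = vcorr P p i y $ a - gdrift p i y $ a"
  using arg_cong[OF vcorr_equation[of i y], of "\<lambda>x. x $ a"] by simp

lemma step_cov_0: "step_cov 0 i y a b = alpha p i y $ a $ b - 2 * (gdrift p i y $ a * gdrift p i y $ b)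
   + gdrift p i y $ a * vcorr P p i y $ b + vcorr P p i y $ a * gdrift p i y $ b
   + (\<Sum>j\<in>UNIV. P i j * (vcorr P p j y $ a * vcorr P p j y $ b)) - vcorr P p i y $ a * vcorr P p i y $ b"
proof -
  let ?v = "\<lambda>j c. vcorr P p j y $ c"
  have "step_cov 0 i y a b = (\<Sum>j\<in>UNIV. P i j * (\<Sum>u\<in>Vsteps. p i y u *
      ((u $ a + (?v j a - ?v i a)) * (u $ b + (?v j b - ?v i b)))))"
    unfolding step_cov_def step_mean_0 by (simp add: corr_step_def sum_distrib_left mult.assoc add_diff_eq)
  also have "\<dots> = (\<Sum>j\<in>UNIV. P i j * (alpha p i y $ a $ b + (?v j a - ?v i a) * gdrift p i y $ b
      + gdrift p i y $ a * (?v j b - ?v i b) + (?v j a - ?v i a) * (?v j b - ?v i b)))"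
    by (simp add: moment_shifted)
  finally show ?thesis
    by (simp only: kernel_cov_identity[OF P_row_sum P_vcorr_nth P_vcorr_nth])
qed

text \<open>Averaging over \<open>\<mu>\<close>, the terms \<open>\<Sum>_j P(i,j) v_j v_j^t\<close> and \<open>v_i v_i^t\<close> of \<open>step_cov_0\<close>
  cancel by invariance; what remains is exactly \<open>abar\<close>.\<close>
lemma cov_defect_centered: "(\<Sum>i\<in>UNIV. \<mu> i * cov_defect i y a b) = 0"
proof -
  let ?w = "\<lambda>j. vcorr P p j y $ a * vcorr P p j y $ b"
  have "(\<Sum>i\<in>UNIV. \<mu> i * (\<Sum>j\<in>UNIV. P i j * ?w j)) = (\<Sum>j\<in>UNIV. \<Sum>i\<in>UNIV. \<mu> i * P i j * ?w j)"
    by (subst sum.swap) (simp add: sum_distrib_left mult.assoc)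
  also have "\<dots> = (\<Sum>j\<in>UNIV. \<mu> j * ?w j)"
    by (simp add: sum_distrib_right[symmetric] mu_invariant)
  finally have "(\<Sum>i\<in>UNIV. \<mu> i * (\<Sum>j\<in>UNIV. P i j * ?w j)) = (\<Sum>j\<in>UNIV. \<mu> j * ?w j)" .
  then have "(\<Sum>i\<in>UNIV. \<mu> i * step_cov 0 i y a b) = abar P \<mu> p y $ a $ b"
    unfolding step_cov_0 abar_nth by (simp add: sum.distrib sum_subtractf algebra_simps)
  then show ?thesis
    unfolding cov_defect_def
    by (simp add: right_diff_distrib sum_subtractf sum_distrib_right[symmetric] mu_sum)
qed

lemma cov_defect_bounds:
  obtains Bh Lh where "\<And>i y a b. \<bar>cov_defect i y a b\<bar> \<le> Bh" "0 \<le> Lh"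
    "\<And>i x y a b. \<bar>cov_defect i x a b - cov_defect i y a b\<bar> \<le> Lh * norm (x - y)"
proof -
  have "bounded_lipschitz (\<lambda>y. cov_defect i y a b)" for i a b
    unfolding cov_defect_def step_cov_0
    by (intro bounded_lipschitz_intros alpha_bounded_lipschitz gdrift_bounded_lipschitz
        vcorr_bounded_lipschitz abar_bounded_lipschitz) auto
  then have "bounded_lipschitz (case t of (i, a, b) \<Rightarrow> \<lambda>y. cov_defect i y a b)" for t
    by (cases t) auto
  then obtain B L
    where B: "\<And>t x. \<bar>(case t of (i, a, b) \<Rightarrow> \<lambda>y. cov_defect i y a b) x\<bar> \<le> B" and L: "0 \<le> L"
      and BL: "\<And>t x y. \<bar>(case t of (i, a, b) \<Rightarrow> \<lambda>y. cov_defect i y a b) x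
        - (case t of (i, a, b) \<Rightarrow> \<lambda>y. cov_defect i y a b) y\<bar> \<le> L * norm (x - y)"
    by (rule bounded_lipschitz_uniform[of "\<lambda>t. case t of (i, a, b) \<Rightarrow> \<lambda>y. cov_defect i y a b"]) blast
  show ?thesis
  proof (rule that[OF _ L])
    show "\<bar>cov_defect i y a b\<bar> \<le> B" for i y a b using B[of "(i, a, b)" y] by simp
    show "\<bar>cov_defect i x a b - cov_defect i y a b\<bar> \<le> L * norm (x - y)" for i x y a b
      using BL[of "(i, a, b)" x y] by simp
  qed
qed

lemma norm_corr_step_le: "u \<in> Vsteps \<Longrightarrow> norm (corr_step s j u y) \<le> 1 + Kmix"
  unfolding corr_step_def using norm_triangle_ineq[of u] norm_Vsteps norm_vcorr_le
  by (smt (verit, best))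

lemma norm_step_mean_le: "norm (step_mean s i y) \<le> 1 + Kmix"
  unfolding step_mean_def by (rule norm_kernel_avg_le) (rule norm_corr_step_le)

lemma norm_corr_step_shift_le:
  assumes "u \<in> Vsteps" "0 \<le> s"
  shows "norm (corr_step s j u y - corr_step 0 j u y) \<le> Kmix * Lg * s"
  using vcorr_lipschitz[of j "y + s *\<^sub>R u" y] assms norm_Vsteps[OF assms(1)]
  by (simp add: corr_step_def)

lemma norm_step_mean_shift_le:
  assumes "0 \<le> s"
  shows "norm (step_mean s i y - step_mean 0 i y) \<le> Kmix * Lg * s"
proof -
  have "step_mean s i y - step_mean 0 i y
      = (\<Sum>j\<in>UNIV. \<Sum>u\<in>Vsteps. (P i j * p i y u) *\<^sub>R (corr_step s j u y - corr_step 0 j u y))"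
    unfolding step_mean_def by (simp add: scaleR_diff_right sum_subtractf)
  also have "norm \<dots> \<le> Kmix * Lg * s"
    by (rule norm_kernel_avg_le) (rule norm_corr_step_shift_le[OF _ assms])
  finally show ?thesis .
qed

lemma norm_centered_step_le:
  assumes "u \<in> Vsteps"
  shows "norm (corr_step s j u y - step_mean s i y) \<le> 2 * (1 + Kmix)"
proof -
  have "norm (corr_step s j u y - step_mean s i y) \<le> norm (corr_step s j u y) + norm (step_mean s i y)"
    by (rule norm_triangle_ineq4)
  also have "\<dots> \<le> (1 + Kmix) + (1 + Kmix)" by (intro add_mono norm_corr_step_le[OF assms] norm_step_mean_le)
  finally show ?thesis by simp
qed

lemma norm_centered_step_shift_le:
  assumes "u \<in> Vsteps" "0 \<le> s"
  shows "norm (corr_step s j u y - step_mean s i y - (corr_step 0 j u y - step_mean 0 i y))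
    \<le> 2 * (Kmix * Lg * s)"
  using norm_triangle_ineq4[of "corr_step s j u y - corr_step 0 j u y" "step_mean s i y - step_mean 0 i y"]
    norm_corr_step_shift_le[OF assms, of j y] norm_step_mean_shift_le[OF assms(2), of i y]
  by (simp add: algebra_simps)

definition Ccov :: real where "Ccov = 8 * (1 + Kmix) * (Kmix * Lg)"

lemma Ccov_nonneg: "0 \<le> Ccov" by (simp add: Ccov_def Kmix_nonneg Lg)

lemma step_cov_shift_le:
  assumes "0 \<le> s"
  shows "\<bar>step_cov s i y a b - step_cov 0 i y a b\<bar> \<le> Ccov * s"
proof -
  have "\<bar>step_cov s i y a b - step_cov 0 i y a b\<bar> \<le> 2 * (2 * (1 + Kmix)) * (2 * (Kmix * Lg * s))"
    unfolding step_cov_def sum_subtractf[symmetric] right_diff_distrib[symmetric]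
    by (rule abs_kernel_avg_le, rule abs_component_prod_diff_le[OF norm_centered_step_le
          norm_centered_step_le norm_centered_step_shift_le[OF _ assms]]; assumption)
  then show ?thesis by (simp add: Ccov_def algebra_simps)
qed

end

section \<open>Conditional expectations along the walk\<close>

lemma borel_measurable_continuous_comp:
  fixes f :: "'a::topological_space \<Rightarrow> 'b::topological_space"
  assumes "Y \<in> borel_measurable M" "continuous_on UNIV f"
  shows "(\<lambda>\<omega>. f (Y \<omega>)) \<in> borel_measurable M"
  by (rule measurable_compose[OF assms(1) borel_measurable_continuous_onI[OF assms(2)]])

lemma borel_measurable_vec_nth [measurable (raw)]:
  fixes f :: "'w \<Rightarrow> real^'d"
  shows "f \<in> borel_measurable M \<Longrightarrow> (\<lambda>w. f w $ c) \<in> borel_measurable M"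
  by (rule borel_measurable_continuous_comp) (auto intro: continuous_on_component continuous_on_id)

lemma borel_measurable_indexed_continuous_comp:
  fixes Z :: "'w \<Rightarrow> 'e::countable" and f :: "'e \<Rightarrow> 'a::topological_space \<Rightarrow> 'b::topological_space"
  assumes "Z \<in> measurable M (count_space UNIV)" "Y \<in> borel_measurable M" "\<And>i. continuous_on UNIV (f i)"
  shows "(\<lambda>\<omega>. f (Z \<omega>) (Y \<omega>)) \<in> borel_measurable M"
  by (rule measurable_compose_countable[OF _ assms(1)])
     (rule borel_measurable_continuous_comp[OF assms(2,3)])

locale walk_process = walk_model P \<mu> p for P :: "'e::finite \<Rightarrow> 'e \<Rightarrow> real" and \<mu>
    and p :: "'e \<Rightarrow> real^'d \<Rightarrow> real^'d \<Rightarrow> real" +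
  fixes N :: "'w measure" and m :: nat and X :: "nat \<Rightarrow> 'w \<Rightarrow> 'e" and Jn :: "nat \<Rightarrow> 'w \<Rightarrow> real^'d"
  assumes prob_N: "prob_space N" and m_pos: "1 \<le> m"
    and X_meas: "\<And>n. X n \<in> measurable N (count_space UNIV)"
    and J_meas: "\<And>n. Jn n \<in> borel_measurable N"
    and J_Vsteps: "\<And>n \<omega>. \<omega> \<in> space N \<Longrightarrow> Jn n \<omega> \<in> Vsteps"
    and transition: "\<And>n k u. u \<in> Vsteps \<Longrightarrow>
       AE \<omega> in N. real_cond_exp N (filt N X Jn n)
          (indicator {w \<in> space N. X (Suc n) w = k \<and> Jn (Suc n) w = u}) \<omega>
        = P (X n \<omega>) k * p (X n \<omega>) ((1 / real m) *\<^sub>R Spos Jn n \<omega>) u"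
begin

sublocale N: prob_space N by (rule prob_N)

abbreviation F :: "nat \<Rightarrow> 'w measure" where "F n \<equiv> filt N X Jn n"

definition generators :: "nat \<Rightarrow> 'w set set" where
  "generators n = {X i -` A \<inter> space N | A i. i \<le> n}
     \<union> {Jn i -` B \<inter> space N | B i. i \<le> n \<and> B \<in> sets borel}"

definition ypos :: "nat \<Rightarrow> 'w \<Rightarrow> real^'d" where
  "ypos n \<omega> = (1 / real m) *\<^sub>R Spos Jn n \<omega>"

lemma ypos_Suc: "ypos (Suc n) \<omega> = ypos n \<omega> + (1 / real m) *\<^sub>R Jn (Suc n) \<omega>"
  unfolding ypos_def Spos_def by (simp add: scaleR_add_right)

lemma generators_sets: "generators n \<subseteq> sets N"
proof
  fix S assume "S \<in> generators n"
  then show "S \<in> sets N" unfolding generators_def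
  proof (elim UnE CollectE exE conjE)
    fix A i assume "S = X i -` A \<inter> space N"
    then show ?thesis using measurable_sets[OF X_meas, of A i] by simp
  next
    fix B i assume "S = Jn i -` B \<inter> space N" "B \<in> sets borel"
    then show ?thesis using measurable_sets[OF J_meas, of B i] by simp
  qed
qed

lemma sets_F: "sets (F n) = sigma_sets (space N) (generators n)"
  unfolding filt_def generators_def[symmetric]
  using generators_sets sets.sets_into_space by (simp add: sets_measure_of_conv) blast

lemma space_F [simp]: "space (F n) = space N"
  unfolding filt_def generators_def[symmetric] by (simp add: space_measure_of_conv)

lemma subalgebra_F: "subalgebra N (F n)"
  unfolding subalgebra_def sets_F using sets.sigma_sets_subset[OF generators_sets] by simp

lemma generators_mono: "k \<le> n \<Longrightarrow> generators k \<subseteq> generators n"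
  unfolding generators_def by (smt (verit) Collect_mono_iff Un_mono le_trans)

lemma subalgebra_F_mono: "k \<le> n \<Longrightarrow> subalgebra (F n) (F k)"
  unfolding subalgebra_def sets_F using sigma_sets_subseteq[OF generators_mono] by simp

lemma measurable_F_N: "f \<in> measurable (F n) M' \<Longrightarrow> f \<in> measurable N M'"
  by (rule measurable_from_subalg[OF subalgebra_F])

lemma measurable_F_mono: "k \<le> n \<Longrightarrow> f \<in> measurable (F k) M' \<Longrightarrow> f \<in> measurable (F n) M'"
  by (rule measurable_from_subalg[OF subalgebra_F_mono])

lemma X_measurable_F: "i \<le> n \<Longrightarrow> X i \<in> measurable (F n) (count_space UNIV)"
proof (rule measurableI)
  fix A assume "i \<le> n"
  then have "X i -` A \<inter> space N \<in> generators n" unfolding generators_def by blast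
  then show "X i -` A \<inter> space (F n) \<in> sets (F n)" unfolding sets_F by auto
qed auto

lemma J_measurable_F: "i \<le> n \<Longrightarrow> Jn i \<in> borel_measurable (F n)"
proof (rule measurableI)
  fix B :: "(real^'d) set" assume "i \<le> n" "B \<in> sets borel"
  then have "Jn i -` B \<inter> space N \<in> generators n" unfolding generators_def by blast
  then show "Jn i -` B \<inter> space (F n) \<in> sets (F n)" unfolding sets_F by auto
qed auto

lemma ypos_measurable_F: "ypos n \<in> borel_measurable (F n)"
  unfolding ypos_def Spos_def
  by (intro borel_measurable_scaleR borel_measurable_const borel_measurable_sum J_measurable_F) auto

lemma sigma_finite_F: "sigma_finite_subalgebra N (F n)"
  by (intro finite_measure_subalgebra_is_sigma_finite)
     (simp add: finite_measure_subalgebra_def finite_measure_subalgebra_axioms_def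
       N.finite_measure_axioms subalgebra_F)

definition next_event :: "nat \<Rightarrow> 'e \<Rightarrow> real^'d \<Rightarrow> 'w set" where
  "next_event n j u = {w \<in> space N. X (Suc n) w = j \<and> Jn (Suc n) w = u}"

lemma next_event_sets: "next_event n j u \<in> sets N"
proof -
  have "next_event n j u = (X (Suc n) -` {j} \<inter> space N) \<inter> (Jn (Suc n) -` {u} \<inter> space N)"
    unfolding next_event_def by auto
  then show ?thesis
    using measurable_sets[OF X_meas, of "{j}" "Suc n"] measurable_sets[OF J_meas, of "{u}" "Suc n"]
    by auto
qed

lemma next_step_decomp:
  fixes \<phi> :: "'e \<Rightarrow> real^'d \<Rightarrow> 'w \<Rightarrow> real"
  assumes "\<omega> \<in> space N"
  shows "\<phi> (X (Suc n) \<omega>) (Jn (Suc n) \<omega>) \<omega>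
    = (\<Sum>(j, u)\<in>UNIV \<times> Vsteps. \<phi> j u \<omega> * indicator (next_event n j u) \<omega>)"
proof -
  have "(\<Sum>(j, u)\<in>UNIV \<times> Vsteps. \<phi> j u \<omega> * indicator (next_event n j u) \<omega>)
      = (\<Sum>ju\<in>UNIV \<times> Vsteps. if ju = (X (Suc n) \<omega>, Jn (Suc n) \<omega>) then \<phi> (fst ju) (snd ju) \<omega> else 0)"
    by (rule sum.cong) (auto simp: next_event_def indicator_def assms)
  also have "\<dots> = \<phi> (X (Suc n) \<omega>) (Jn (Suc n) \<omega>) \<omega>"
    using J_Vsteps[OF assms] by (simp add: finite_Vsteps)
  finally show ?thesis by simp
qed

lemma integrable_mult_next_event:
  fixes \<phi> :: "'w \<Rightarrow> real"
  assumes meas: "u \<in> Vsteps \<Longrightarrow> \<phi> \<in> borel_measurable (F n)"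
    and bnd: "\<And>\<omega>. u \<in> Vsteps \<Longrightarrow> \<omega> \<in> space N \<Longrightarrow> \<bar>\<phi> \<omega>\<bar> \<le> B"
  shows "integrable N (\<lambda>\<omega>. \<phi> \<omega> * indicator (next_event n j u) \<omega>)"
proof (cases "u \<in> Vsteps")
  case True
  show ?thesis
  proof (rule N.integrable_const_bound[where B=B])
    show "AE \<omega> in N. norm (\<phi> \<omega> * indicator (next_event n j u) \<omega>) \<le> B"
      using bnd[OF True] by (intro AE_I2) (auto simp: indicator_def intro: order_trans[OF _ bnd[OF True]])
    show "(\<lambda>\<omega>. \<phi> \<omega> * indicator (next_event n j u) \<omega>) \<in> borel_measurable N"
      using measurable_F_N[OF meas[OF True]] next_event_sets by measurable
  qed
next
  case False
  then have "next_event n j u = {}" using J_Vsteps by (auto simp: next_event_def)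
  then show ?thesis by simp
qed

lemma cond_exp_next_event:
  fixes \<phi> :: "'w \<Rightarrow> real"
  assumes u: "u \<in> Vsteps" and meas: "\<phi> \<in> borel_measurable (F n)"
    and bnd: "\<And>\<omega>. \<omega> \<in> space N \<Longrightarrow> \<bar>\<phi> \<omega>\<bar> \<le> B"
  shows "AE \<omega> in N. real_cond_exp N (F n) (\<lambda>\<omega>. \<phi> \<omega> * indicator (next_event n j u) \<omega>) \<omega>
    = \<phi> \<omega> * (P (X n \<omega>) j * p (X n \<omega>) (ypos n \<omega>) u)"
proof -
  interpret S: sigma_finite_subalgebra N "F n" by (rule sigma_finite_F)
  have "AE \<omega> in N. real_cond_exp N (F n) (\<lambda>\<omega>. \<phi> \<omega> * indicator (next_event n j u) \<omega>) \<omega>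
      = \<phi> \<omega> * real_cond_exp N (F n) (indicator (next_event n j u)) \<omega>"
    using integrable_mult_next_event[OF meas bnd]
    by (intro S.real_cond_exp_mult meas borel_measurable_indicator next_event_sets)
  moreover have "AE \<omega> in N. real_cond_exp N (F n) (indicator (next_event n j u)) \<omega>
      = P (X n \<omega>) j * p (X n \<omega>) (ypos n \<omega>) u"
    unfolding next_event_def ypos_def by (rule transition[OF u])
  ultimately show ?thesis by eventually_elim simp
qed

lemma cond_exp_next_step:
  fixes \<phi> :: "'e \<Rightarrow> real^'d \<Rightarrow> 'w \<Rightarrow> real"
  assumes meas: "\<And>j u. u \<in> Vsteps \<Longrightarrow> \<phi> j u \<in> borel_measurable (F n)"
    and bnd: "\<And>j u \<omega>. u \<in> Vsteps \<Longrightarrow> \<omega> \<in> space N \<Longrightarrow> \<bar>\<phi> j u \<omega>\<bar> \<le> B"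
  shows "AE \<omega> in N. real_cond_exp N (F n) (\<lambda>\<omega>. \<phi> (X (Suc n) \<omega>) (Jn (Suc n) \<omega>) \<omega>) \<omega>
           = (\<Sum>j\<in>UNIV. \<Sum>u\<in>Vsteps. P (X n \<omega>) j * p (X n \<omega>) (ypos n \<omega>) u * \<phi> j u \<omega>)"
proof -
  interpret S: sigma_finite_subalgebra N "F n" by (rule sigma_finite_F)
  define T where "T = (\<lambda>(j, u) \<omega>. \<phi> j u \<omega> * indicator (next_event n j u) \<omega>)"
  have T_int: "integrable N (T ju)" for ju
    unfolding T_def by (cases ju) (auto intro!: integrable_mult_next_event meas bnd)
  have sum_meas: "(\<lambda>\<omega>. \<Sum>ju\<in>UNIV \<times> Vsteps. T ju \<omega>) \<in> borel_measurable N"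
    using T_int by (intro borel_measurable_sum) (auto intro: borel_measurable_integrable)
  have decomp: "\<omega> \<in> space N \<Longrightarrow> \<phi> (X (Suc n) \<omega>) (Jn (Suc n) \<omega>) \<omega> = (\<Sum>ju\<in>UNIV \<times> Vsteps. T ju \<omega>)" for \<omega>
    using next_step_decomp[of \<omega> \<phi> n] by (simp add: T_def split_def)
  have "AE \<omega> in N. real_cond_exp N (F n) (\<lambda>\<omega>. \<phi> (X (Suc n) \<omega>) (Jn (Suc n) \<omega>) \<omega>) \<omega>
     = real_cond_exp N (F n) (\<lambda>\<omega>. \<Sum>ju\<in>UNIV \<times> Vsteps. T ju \<omega>) \<omega>"
  proof (rule S.real_cond_exp_cong)
    show "(\<lambda>\<omega>. \<phi> (X (Suc n) \<omega>) (Jn (Suc n) \<omega>) \<omega>) \<in> borel_measurable N"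
      using sum_meas decomp by (subst measurable_cong) auto
  qed (use decomp sum_meas in \<open>auto intro!: AE_I2\<close>)
  moreover have "AE \<omega> in N. real_cond_exp N (F n) (\<lambda>\<omega>. \<Sum>ju\<in>UNIV \<times> Vsteps. T ju \<omega>) \<omega>
      = (\<Sum>ju\<in>UNIV \<times> Vsteps. real_cond_exp N (F n) (T ju) \<omega>)"
    by (rule S.real_cond_exp_sum[OF T_int])
  moreover have "AE \<omega> in N. \<forall>(j, u)\<in>UNIV \<times> Vsteps. real_cond_exp N (F n) (T (j, u)) \<omega>
      = \<phi> j u \<omega> * (P (X n \<omega>) j * p (X n \<omega>) (ypos n \<omega>) u)"
    using cond_exp_next_event[OF _ meas bnd]
    by (intro AE_finite_allI) (auto simp: finite_Vsteps T_def)
  ultimately show ?thesis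
  proof eventually_elim
    case (elim \<omega>)
    have "(\<Sum>ju\<in>UNIV \<times> Vsteps. real_cond_exp N (F n) (T ju) \<omega>)
        = (\<Sum>(j, u)\<in>UNIV \<times> Vsteps. \<phi> j u \<omega> * (P (X n \<omega>) j * p (X n \<omega>) (ypos n \<omega>) u))"
      using elim(3) by (intro sum.cong) auto
    then show ?case
      using elim(1,2) by (simp add: sum.cartesian_product[symmetric] mult_ac)
  qed
qed

end

section \<open>Additive functionals of the walk\<close>

lemma power4_add_le:
  fixes M t c :: real
  assumes t: "\<bar>t\<bar> \<le> c"
  shows "(M + t) ^ 4 \<le> M ^ 4 + 4 * M ^ 3 * t + 8 * c\<^sup>2 * M\<^sup>2 + 3 * c ^ 4"
proof -
  have c0: "0 \<le> c" using t by linarith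
  have e: "(M + t) ^ 4 = M ^ 4 + 4 * M ^ 3 * t + 6 * (M\<^sup>2 * t\<^sup>2) + 4 * (M * t ^ 3) + t ^ 4"
    by algebra
  have t2: "t\<^sup>2 \<le> c\<^sup>2" using t by (metis abs_le_square_iff abs_of_nonneg c0)
  have t4: "t ^ 4 \<le> c ^ 4"
    using power_mono[OF t, of 4] by (simp add: power_abs[symmetric])
  have a: "M\<^sup>2 * t\<^sup>2 \<le> M\<^sup>2 * c\<^sup>2" using t2 by (intro mult_left_mono) auto
  have b: "M * t ^ 3 \<le> \<bar>M\<bar> * c ^ 3"
  proof -
    have "M * t ^ 3 \<le> \<bar>M * t ^ 3\<bar>" by simp
    also have "\<dots> = \<bar>M\<bar> * \<bar>t\<bar> ^ 3" by (simp add: abs_mult power_abs)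
    also have "\<dots> \<le> \<bar>M\<bar> * c ^ 3" using t by (intro mult_left_mono power_mono) auto
    finally show ?thesis .
  qed
  \<comment> \<open>AM-GM\<close>
  have d: "4 * (\<bar>M\<bar> * c ^ 3) \<le> 2 * c\<^sup>2 * (M\<^sup>2 + c\<^sup>2)"
  proof -
    have "2 * (\<bar>M\<bar> * c) \<le> M\<^sup>2 + c\<^sup>2"
      using sum_squares_bound[of "\<bar>M\<bar>" c] by (simp add: power2_eq_square)
    then have "2 * c\<^sup>2 * (2 * (\<bar>M\<bar> * c)) \<le> 2 * c\<^sup>2 * (M\<^sup>2 + c\<^sup>2)" by (intro mult_left_mono) auto
    then show ?thesis by (simp add: power2_eq_square power3_eq_cube)
  qed
  have "(M + t) ^ 4 \<le> M ^ 4 + 4 * M ^ 3 * t + 6 * (M\<^sup>2 * c\<^sup>2) + 2 * c\<^sup>2 * (M\<^sup>2 + c\<^sup>2) + c ^ 4"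
    unfolding e using a b d t4 by linarith
  also have "\<dots> = M ^ 4 + 4 * M ^ 3 * t + 8 * c\<^sup>2 * M\<^sup>2 + 3 * c ^ 4"
    by algebra
  finally show ?thesis .
qed

context walk_process
begin

lemma integrable_boundedI:
  fixes f :: "'w \<Rightarrow> real"
  shows "f \<in> borel_measurable N \<Longrightarrow> (\<And>\<omega>. \<bar>f \<omega>\<bar> \<le> C) \<Longrightarrow> integrable N f"
  by (rule N.integrable_const_bound[where B=C]) auto

end

text \<open>A centred observable \<open>h\<close> of the chain, bounded and Lipschitz in the space variable: the
  Poisson equation \<open>w = h + P w\<close> writes \<open>\<Sum>_{k<n} h(\<xi>_k, S_k/m)\<close> as a martingale with bounded
  increments plus \<open>O(n/m + 1)\<close>.\<close>
locale centered_functional = walk_process P \<mu> p N m X Jn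
  for P :: "'e::finite \<Rightarrow> 'e \<Rightarrow> real" and \<mu> and p :: "'e \<Rightarrow> real^'d \<Rightarrow> real^'d \<Rightarrow> real"
    and N :: "'w measure" and m X Jn +
  fixes h :: "'e \<Rightarrow> real^'d \<Rightarrow> real" and Bh Lh :: real
  assumes h_centered: "\<And>y. (\<Sum>i\<in>UNIV. \<mu> i * h i y) = 0"
    and h_bounded: "\<And>i y. \<bar>h i y\<bar> \<le> Bh"
    and h_lipschitz: "\<And>i x y. \<bar>h i x - h i y\<bar> \<le> Lh * norm (x - y)"
    and Lh_nonneg: "0 \<le> Lh"
begin

lemma Bh_nonneg: "0 \<le> Bh" using h_bounded[of undefined 0] by linarith

lemma centered_h: "centered (\<lambda>j. h j y)"
  unfolding centered_def using h_centered[of y] by simp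

definition hpois :: "'e \<Rightarrow> real^'d \<Rightarrow> real" where "hpois i y = poisson (\<lambda>j. h j y) i"

lemma hpois_bounded: "\<bar>hpois i y\<bar> \<le> Kmix * Bh"
  using norm_poisson_le[OF centered_h, where B=Bh and i=i] h_bounded by (simp add: hpois_def)

lemma hpois_lipschitz: "\<bar>hpois i x - hpois i y\<bar> \<le> Kmix * Lh * norm (x - y)"
proof -
  have "hpois i x - hpois i y = poisson (\<lambda>j. h j x - h j y) i"
    unfolding hpois_def by (rule poisson_diff[OF centered_h centered_h])
  also have "\<bar>\<dots>\<bar> \<le> Kmix * (Lh * norm (x - y))"
    using norm_poisson_le[OF centered_diff[OF centered_h centered_h], where B="Lh * norm (x - y)"]
      h_lipschitz by simp
  finally show ?thesis by (simp add: mult.assoc)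
qed

lemma hpois_equation: "hpois i y = h i y + (\<Sum>k\<in>UNIV. P i k * hpois k y)"
  using poisson_equation[OF centered_h, where i=i] by (simp add: hpois_def)

lemma hpois_continuous: "continuous_on UNIV (hpois i)"
proof -
  have "(Kmix * Lh)-lipschitz_on UNIV (hpois i)"
    by (intro lipschitz_onI) (auto simp: dist_norm dist_real_def hpois_lipschitz Kmix_nonneg Lh_nonneg)
  then show ?thesis by (rule lipschitz_on_continuous_on)
qed

lemma hpois_shift_continuous: "continuous_on UNIV (\<lambda>y. hpois j (y + c *\<^sub>R u))"
  by (rule continuous_on_compose2[OF hpois_continuous]) (auto intro!: continuous_intros)

definition hpois_mean :: "'e \<Rightarrow> real^'d \<Rightarrow> real" where
  "hpois_mean i y = (\<Sum>j\<in>UNIV. \<Sum>u\<in>Vsteps. P i j * p i y u * hpois j (y + (1 / real m) *\<^sub>R u))"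

definition mart_incr :: "nat \<Rightarrow> 'w \<Rightarrow> real" where
  "mart_incr k \<omega> = hpois (X (Suc k) \<omega>) (ypos (Suc k) \<omega>) - hpois_mean (X k \<omega>) (ypos k \<omega>)"

definition mart :: "nat \<Rightarrow> 'w \<Rightarrow> real" where "mart n \<omega> = (\<Sum>k<n. mart_incr k \<omega>)"

definition Cincr :: real where "Cincr = 2 * Kmix * Bh"

lemma Cincr_nonneg: "0 \<le> Cincr" by (simp add: Cincr_def Kmix_nonneg Bh_nonneg)

lemma hpois_mean_bounded: "\<bar>hpois_mean i y\<bar> \<le> Kmix * Bh"
  unfolding hpois_mean_def by (rule abs_kernel_avg_le) (rule hpois_bounded)

lemma hpois_mean_measurable: "(\<lambda>\<omega>. hpois_mean (X k \<omega>) (ypos k \<omega>)) \<in> borel_measurable (F k)"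
  unfolding hpois_mean_def
  by (intro borel_measurable_indexed_continuous_comp[OF X_measurable_F ypos_measurable_F]
      continuous_on_sum continuous_on_mult continuous_on_const p_continuous hpois_shift_continuous) auto

lemma mart_incr_measurable: "mart_incr k \<in> borel_measurable (F (Suc k))"
  unfolding mart_incr_def
  using borel_measurable_indexed_continuous_comp[OF X_measurable_F ypos_measurable_F hpois_continuous]
    measurable_F_mono[OF _ hpois_mean_measurable]
  by (intro borel_measurable_diff) auto

lemma mart_incr_bounded: "\<bar>mart_incr k \<omega>\<bar> \<le> Cincr"
  using hpois_bounded[of "X (Suc k) \<omega>" "ypos (Suc k) \<omega>"] hpois_mean_bounded[of "X k \<omega>" "ypos k \<omega>"]
  unfolding mart_incr_def Cincr_def by linarith

lemma mart_measurable: "mart n \<in> borel_measurable (F n)"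
  unfolding mart_def by (intro borel_measurable_sum measurable_F_mono[OF _ mart_incr_measurable]) auto

lemma mart_bounded: "\<bar>mart n \<omega>\<bar> \<le> Cincr * n"
proof -
  have "\<bar>mart n \<omega>\<bar> \<le> (\<Sum>k<n. \<bar>mart_incr k \<omega>\<bar>)" unfolding mart_def by (rule sum_abs)
  also have "\<dots> \<le> (\<Sum>k<n. Cincr)" by (rule sum_mono) (rule mart_incr_bounded)
  finally show ?thesis by (simp add: mult.commute)
qed

lemma mart_Suc: "mart (Suc n) \<omega> = mart n \<omega> + mart_incr n \<omega>"
  by (simp add: mart_def)

lemma cond_exp_hpois_next:
  "AE \<omega> in N. real_cond_exp N (F k) (\<lambda>\<omega>. hpois (X (Suc k) \<omega>) (ypos (Suc k) \<omega>)) \<omega>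
     = hpois_mean (X k \<omega>) (ypos k \<omega>)"
proof -
  have "(\<lambda>\<omega>. hpois (X (Suc k) \<omega>) (ypos (Suc k) \<omega>))
      = (\<lambda>\<omega>. (\<lambda>j u \<omega>. hpois j (ypos k \<omega> + (1 / real m) *\<^sub>R u)) (X (Suc k) \<omega>) (Jn (Suc k) \<omega>) \<omega>)"
    by (simp add: ypos_Suc)
  moreover have "AE \<omega> in N. real_cond_exp N (F k)
      (\<lambda>\<omega>. (\<lambda>j u \<omega>. hpois j (ypos k \<omega> + (1 / real m) *\<^sub>R u)) (X (Suc k) \<omega>) (Jn (Suc k) \<omega>) \<omega>) \<omega>
    = (\<Sum>j\<in>UNIV. \<Sum>u\<in>Vsteps. P (X k \<omega>) j * p (X k \<omega>) (ypos k \<omega>) u * hpois j (ypos k \<omega> + (1 / real m) *\<^sub>R u))"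
    by (rule cond_exp_next_step[OF borel_measurable_continuous_comp[OF ypos_measurable_F
          hpois_shift_continuous] hpois_bounded])
  ultimately show ?thesis by (simp add: hpois_mean_def)
qed

lemma mart_incr_orthogonal:
  assumes Zm: "Z \<in> borel_measurable (F k)" and Zb: "\<And>\<omega>. \<bar>Z \<omega>\<bar> \<le> C"
  shows "(\<integral>\<omega>. Z \<omega> * mart_incr k \<omega> \<partial>N) = 0"
proof -
  interpret S: sigma_finite_subalgebra N "F k" by (rule sigma_finite_F)
  define W where "W \<omega> = hpois (X (Suc k) \<omega>) (ypos (Suc k) \<omega>)" for \<omega>
  define V where "V \<omega> = hpois_mean (X k \<omega>) (ypos k \<omega>)" for \<omega>
  have W_meas: "W \<in> borel_measurable N"
    unfolding W_def
    by (rule measurable_F_N[OF borel_measurable_indexed_continuous_comp[OF X_measurable_F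
          ypos_measurable_F hpois_continuous]]) simp
  have V_meas: "V \<in> borel_measurable N"
    unfolding V_def by (rule measurable_F_N[OF hpois_mean_measurable])
  have ZN: "Z \<in> borel_measurable N" by (rule measurable_F_N[OF Zm])
  have C0: "0 \<le> C" using Zb[of undefined] by linarith
  have int_W: "integrable N (\<lambda>\<omega>. Z \<omega> * W \<omega>)"
  proof (rule integrable_boundedI[where C="C * (Kmix * Bh)"])
    show "(\<lambda>\<omega>. Z \<omega> * W \<omega>) \<in> borel_measurable N" using ZN W_meas by measurable
    show "\<bar>Z \<omega> * W \<omega>\<bar> \<le> C * (Kmix * Bh)" for \<omega>
      unfolding abs_mult W_def using Zb hpois_bounded C0 by (intro mult_mono) auto
  qed
  have int_V: "integrable N (\<lambda>\<omega>. Z \<omega> * V \<omega>)"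
  proof (rule integrable_boundedI[where C="C * (Kmix * Bh)"])
    show "(\<lambda>\<omega>. Z \<omega> * V \<omega>) \<in> borel_measurable N" using ZN V_meas by measurable
    show "\<bar>Z \<omega> * V \<omega>\<bar> \<le> C * (Kmix * Bh)" for \<omega>
      unfolding abs_mult V_def using Zb hpois_mean_bounded C0 by (intro mult_mono) auto
  qed
  have "(\<integral>\<omega>. Z \<omega> * W \<omega> \<partial>N) = (\<integral>\<omega>. Z \<omega> * real_cond_exp N (F k) W \<omega> \<partial>N)"
    by (rule S.real_cond_exp_intg(2)[symmetric, OF int_W Zm W_meas])
  also have "\<dots> = (\<integral>\<omega>. Z \<omega> * V \<omega> \<partial>N)"
  proof -
    have ce: "AE \<omega> in N. real_cond_exp N (F k) W \<omega> = V \<omega>"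
      using cond_exp_hpois_next[of k] by (simp add: W_def[abs_def] V_def)
    show ?thesis by (rule integral_cong_AE) (use ce ZN V_meas in auto)
  qed
  finally show ?thesis
    unfolding mart_incr_def W_def[symmetric] V_def[symmetric] right_diff_distrib
    using Bochner_Integration.integral_diff[OF int_W int_V] by simp
qed

lemma mart_power_bounded: "\<bar>mart n \<omega> ^ k\<bar> \<le> (Cincr * n) ^ k"
  unfolding power_abs by (intro power_mono mart_bounded abs_ge_zero)

lemma mart_incr_sq_bounded: "(mart_incr j \<omega>)\<^sup>2 \<le> Cincr\<^sup>2"
  using power_mono[OF mart_incr_bounded abs_ge_zero, of j \<omega> 2] by simp

lemma mart_power_integrable: "integrable N (\<lambda>\<omega>. mart n \<omega> ^ k)"
  by (rule integrable_boundedI[OF _ mart_power_bounded]) (use measurable_F_N[OF mart_measurable] in measurable)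

lemma mart_power_incr_integrable: "integrable N (\<lambda>\<omega>. mart n \<omega> ^ k * mart_incr j \<omega>)"
proof (rule integrable_boundedI[where C="(Cincr * n) ^ k * Cincr"])
  show "(\<lambda>\<omega>. mart n \<omega> ^ k * mart_incr j \<omega>) \<in> borel_measurable N"
    using measurable_F_N[OF mart_measurable] measurable_F_N[OF mart_incr_measurable] by measurable
  show "\<bar>mart n \<omega> ^ k * mart_incr j \<omega>\<bar> \<le> (Cincr * n) ^ k * Cincr" for \<omega>
    unfolding abs_mult using Cincr_nonneg by (intro mult_mono mart_power_bounded mart_incr_bounded) auto
qed

lemma mart_incr_sq_integrable: "integrable N (\<lambda>\<omega>. (mart_incr j \<omega>)\<^sup>2)"
  by (rule integrable_boundedI[where C="Cincr\<^sup>2"])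
    (use measurable_F_N[OF mart_incr_measurable] mart_incr_sq_bounded in auto)

lemma mart_power_incr_orthogonal: "(\<integral>\<omega>. mart n \<omega> ^ k * mart_incr n \<omega> \<partial>N) = 0"
  by (rule mart_incr_orthogonal[OF _ mart_power_bounded]) (use mart_measurable in measurable)

lemma mart_second_moment: "(\<integral>\<omega>. (mart n \<omega>)\<^sup>2 \<partial>N) \<le> Cincr\<^sup>2 * n"
proof (induction n)
  case 0
  then show ?case by (simp add: mart_def)
next
  case (Suc n)
  have "(mart (Suc n) \<omega>)\<^sup>2 = (mart n \<omega>)\<^sup>2 + 2 * (mart n \<omega> ^ 1 * mart_incr n \<omega>) + (mart_incr n \<omega>)\<^sup>2"
    for \<omega> by (simp add: mart_Suc power2_eq_square algebra_simps)
  then have "(\<integral>\<omega>. (mart (Suc n) \<omega>)\<^sup>2 \<partial>N) = (\<integral>\<omega>. (mart n \<omega>)\<^sup>2 \<partial>N) + (\<integral>\<omega>. (mart_incr n \<omega>)\<^sup>2 \<partial>N)"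
    using mart_power_integrable[of n 2] mart_power_incr_integrable[of n 1 n] mart_incr_sq_integrable[of n]
      mart_power_incr_orthogonal[of n 1] by simp
  moreover have "(\<integral>\<omega>. (mart_incr n \<omega>)\<^sup>2 \<partial>N) \<le> Cincr\<^sup>2"
    by (intro N.integral_le_const[OF mart_incr_sq_integrable] AE_I2 mart_incr_sq_bounded)
  ultimately show ?case using Suc by (simp add: algebra_simps)
qed

lemma mart_fourth_moment: "(\<integral>\<omega>. mart n \<omega> ^ 4 \<partial>N) \<le> 4 * Cincr ^ 4 * (real n ^ 2 + n)"
proof (induction n)
  case 0
  then show ?case by (simp add: mart_def)
next
  case (Suc n)
  let ?R = "\<lambda>\<omega>. mart n \<omega> ^ 4 + 4 * (mart n \<omega> ^ 3 * mart_incr n \<omega>) + 8 * Cincr\<^sup>2 * (mart n \<omega>)\<^sup>2 + 3 * Cincr ^ 4"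
  have int_R: "integrable N ?R"
    using mart_power_integrable[of n 4] mart_power_incr_integrable[of n 3 n] mart_power_integrable[of n 2]
    by simp
  have "(\<integral>\<omega>. mart (Suc n) \<omega> ^ 4 \<partial>N) \<le> (\<integral>\<omega>. ?R \<omega> \<partial>N)"
    using power4_add_le[OF mart_incr_bounded]
    by (intro integral_mono[OF mart_power_integrable int_R]) (simp add: mart_Suc mult.assoc)
  also have "\<dots> = (\<integral>\<omega>. mart n \<omega> ^ 4 \<partial>N) + 8 * Cincr\<^sup>2 * (\<integral>\<omega>. (mart n \<omega>)\<^sup>2 \<partial>N) + 3 * Cincr ^ 4"
    using mart_power_integrable[of n 4] mart_power_incr_integrable[of n 3 n] mart_power_integrable[of n 2]
      mart_power_incr_orthogonal[of n 3] N.prob_space by simp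
  also have "\<dots> \<le> 4 * Cincr ^ 4 * (real n ^ 2 + n) + 8 * Cincr\<^sup>2 * (Cincr\<^sup>2 * n) + 3 * Cincr ^ 4"
    using Suc mart_second_moment[of n] by (intro add_mono mult_left_mono) auto
  also have "\<dots> \<le> 4 * Cincr ^ 4 * (real (Suc n) ^ 2 + Suc n)"
    using Cincr_nonneg by (simp add: algebra_simps power2_eq_square power4_eq_xxxx)
  finally show ?case .
qed

lemma mart_tail:
  assumes lam: "0 < lam"
  shows "measure N {\<omega>\<in>space N. lam < \<bar>mart n \<omega>\<bar>} \<le> 4 * Cincr ^ 4 * (real n ^ 2 + n) / lam ^ 4"
proof -
  have "{\<omega>\<in>space N. lam < \<bar>mart n \<omega>\<bar>} \<subseteq> {\<omega>\<in>space N. lam ^ 4 \<le> mart n \<omega> ^ 4}"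
    using lam power_mono[of lam "\<bar>mart n _\<bar>" 4] by (auto simp: power_abs[symmetric])
  moreover have "{\<omega>\<in>space N. lam ^ 4 \<le> mart n \<omega> ^ 4} \<in> sets N"
    using measurable_F_N[OF mart_measurable] by measurable
  ultimately have "measure N {\<omega>\<in>space N. lam < \<bar>mart n \<omega>\<bar>} \<le> measure N {\<omega>\<in>space N. lam ^ 4 \<le> mart n \<omega> ^ 4}"
    by (rule N.finite_measure_mono)
  also have "\<dots> \<le> (\<integral>\<omega>. mart n \<omega> ^ 4 \<partial>N) / lam ^ 4"
    by (rule integral_Markov_inequality_measure[OF mart_power_integrable, where A="space N"])
      (use lam in auto)
  also have "\<dots> \<le> 4 * Cincr ^ 4 * (real n ^ 2 + n) / lam ^ 4"
    using lam by (intro divide_right_mono mart_fourth_moment) auto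
  finally show ?thesis .
qed

lemma mart_max_tail:
  assumes lam: "0 < lam"
  shows "measure N {\<omega>\<in>space N. \<exists>n\<le>K. lam < \<bar>mart n \<omega>\<bar>}
    \<le> real (K + 1) * (4 * Cincr ^ 4 * (real K ^ 2 + K)) / lam ^ 4"
proof -
  have sets: "{\<omega>\<in>space N. lam < \<bar>mart n \<omega>\<bar>} \<in> sets N" for n
    using measurable_F_N[OF mart_measurable] by measurable
  have "{\<omega>\<in>space N. \<exists>n\<le>K. lam < \<bar>mart n \<omega>\<bar>} = (\<Union>n\<in>{..K}. {\<omega>\<in>space N. lam < \<bar>mart n \<omega>\<bar>})"
    by auto
  then have "measure N {\<omega>\<in>space N. \<exists>n\<le>K. lam < \<bar>mart n \<omega>\<bar>}
      \<le> (\<Sum>n\<in>{..K}. measure N {\<omega>\<in>space N. lam < \<bar>mart n \<omega>\<bar>})"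
    using measure_UNION_le[of "{..K}" "\<lambda>n. {\<omega>\<in>space N. lam < \<bar>mart n \<omega>\<bar>}" N] sets by simp
  also have "\<dots> \<le> (\<Sum>n\<in>{..K}. 4 * Cincr ^ 4 * (real K ^ 2 + K) / lam ^ 4)"
  proof (rule sum_mono)
    fix n assume "n \<in> {..K}"
    then have "4 * Cincr ^ 4 * (real n ^ 2 + n) / lam ^ 4 \<le> 4 * Cincr ^ 4 * (real K ^ 2 + K) / lam ^ 4"
      using lam Cincr_nonneg by (intro divide_right_mono mult_left_mono add_mono power_mono) auto
    then show "measure N {\<omega>\<in>space N. lam < \<bar>mart n \<omega>\<bar>} \<le> 4 * Cincr ^ 4 * (real K ^ 2 + K) / lam ^ 4"
      using mart_tail[OF lam, of n] by linarith
  qed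
  also have "\<dots> = real (K + 1) * (4 * Cincr ^ 4 * (real K ^ 2 + K)) / lam ^ 4" by simp
  finally show ?thesis .
qed

lemma hpois_mean_error:
  "\<bar>hpois_mean i y - (\<Sum>j\<in>UNIV. P i j * hpois j y)\<bar> \<le> Kmix * Lh / real m"
proof -
  have "(\<Sum>j\<in>UNIV. P i j * hpois j y) = (\<Sum>j\<in>UNIV. \<Sum>u\<in>Vsteps. P i j * p i y u * hpois j y)"
    by (simp add: sum_distrib_left[symmetric] sum_distrib_right[symmetric] p_sum
        mult.commute mult.left_commute)
  then have "hpois_mean i y - (\<Sum>j\<in>UNIV. P i j * hpois j y)
     = (\<Sum>j\<in>UNIV. \<Sum>u\<in>Vsteps. P i j * p i y u * (hpois j (y + (1 / real m) *\<^sub>R u) - hpois j y))"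
    by (simp add: hpois_mean_def right_diff_distrib sum_subtractf)
  also have "\<bar>\<dots>\<bar> \<le> Kmix * Lh / real m"
  proof (rule abs_kernel_avg_le)
    fix j and u :: "real^'d" assume u: "u \<in> Vsteps"
    show "\<bar>hpois j (y + (1 / real m) *\<^sub>R u) - hpois j y\<bar> \<le> Kmix * Lh / real m"
      using hpois_lipschitz[of j "y + (1 / real m) *\<^sub>R u" y] norm_Vsteps[OF u] m_pos by simp
  qed
  finally show ?thesis .
qed

text \<open>Summing \<open>h(\<xi>_k, y_k) = (w(\<xi>_k, y_k) - w(\<xi>_{k+1}, y_{k+1})) + mart_incr k + error_k\<close>,
  where the sum of the first terms telescopes.\<close>
lemma functional_le_mart:
  "\<bar>\<Sum>k<n. h (X k \<omega>) (ypos k \<omega>)\<bar> \<le> \<bar>mart n \<omega>\<bar> + real n * (Kmix * Lh / real m) + 2 * Kmix * Bh"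
proof -
  define W where "W k = hpois (X k \<omega>) (ypos k \<omega>)" for k
  define E where "E k = hpois_mean (X k \<omega>) (ypos k \<omega>) - (\<Sum>j\<in>UNIV. P (X k \<omega>) j * hpois j (ypos k \<omega>))" for k
  have "h (X k \<omega>) (ypos k \<omega>) = (W k - W (Suc k)) + mart_incr k \<omega> + E k" for k
    using hpois_equation[of "X k \<omega>" "ypos k \<omega>"] by (simp add: W_def E_def mart_incr_def)
  then have "(\<Sum>k<n. h (X k \<omega>) (ypos k \<omega>)) = (\<Sum>k<n. W k - W (Suc k)) + mart n \<omega> + (\<Sum>k<n. E k)"
    by (simp add: mart_def sum.distrib)
  also have "(\<Sum>k<n. W k - W (Suc k)) = W 0 - W n" by (rule sum_lessThan_telescope')
  finally have e: "(\<Sum>k<n. h (X k \<omega>) (ypos k \<omega>)) = W 0 - W n + mart n \<omega> + (\<Sum>k<n. E k)" .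
  have "\<bar>\<Sum>k<n. E k\<bar> \<le> (\<Sum>k<n. Kmix * Lh / real m)"
    unfolding E_def by (rule order.trans[OF sum_abs sum_mono]) (rule hpois_mean_error)
  then have "\<bar>\<Sum>k<n. E k\<bar> \<le> real n * (Kmix * Lh / real m)" by simp
  moreover have "\<bar>W 0\<bar> \<le> Kmix * Bh" "\<bar>W n\<bar> \<le> Kmix * Bh" unfolding W_def by (rule hpois_bounded)+
  ultimately show ?thesis unfolding e by linarith
qed

lemma h_continuous: "continuous_on UNIV (h i)"
proof -
  have "Lh-lipschitz_on UNIV (h i)"
    by (intro lipschitz_onI) (auto simp: dist_norm dist_real_def h_lipschitz Lh_nonneg)
  then show ?thesis by (rule lipschitz_on_continuous_on)
qed

lemma functional_event_sets:
  "{\<omega>\<in>space N. \<exists>n\<le>K. c n < \<bar>\<Sum>k<n. h (X k \<omega>) (ypos k \<omega>)\<bar>} \<in> sets N"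
proof -
  have [measurable]: "(\<lambda>\<omega>. h (X k \<omega>) (ypos k \<omega>)) \<in> borel_measurable N" for k
    by (rule measurable_F_N[OF borel_measurable_indexed_continuous_comp[OF X_measurable_F
          ypos_measurable_F h_continuous]]) simp
  have "{\<omega>\<in>space N. \<exists>n\<le>K. c n < \<bar>\<Sum>k<n. h (X k \<omega>) (ypos k \<omega>)\<bar>}
      = (\<Union>n\<in>{..K}. {\<omega>\<in>space N. c n < \<bar>\<Sum>k<n. h (X k \<omega>) (ypos k \<omega>)\<bar>})"
    by auto
  also have "\<dots> \<in> sets N" by measurable
  finally show ?thesis .
qed

lemma functional_tail:
  assumes lam: "0 < lam"
  shows "measure N {\<omega>\<in>space N. \<exists>n\<le>K. lam + real n * (Kmix * Lh / real m) + 2 * Kmix * Bh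
      < \<bar>\<Sum>k<n. h (X k \<omega>) (ypos k \<omega>)\<bar>}
    \<le> real (K + 1) * (4 * Cincr ^ 4 * (real K ^ 2 + K)) / lam ^ 4"
proof -
  have "{\<omega>\<in>space N. \<exists>n\<le>K. lam + real n * (Kmix * Lh / real m) + 2 * Kmix * Bh
      < \<bar>\<Sum>k<n. h (X k \<omega>) (ypos k \<omega>)\<bar>} \<subseteq> {\<omega>\<in>space N. \<exists>n\<le>K. lam < \<bar>mart n \<omega>\<bar>}"
    using functional_le_mart by (smt (verit, best) Collect_mono_iff)
  moreover have "{\<omega>\<in>space N. \<exists>n\<le>K. lam < \<bar>mart n \<omega>\<bar>} \<in> sets N"
    using measurable_F_N[OF mart_measurable] by measurable
  ultimately have "measure N {\<omega>\<in>space N. \<exists>n\<le>K. lam + real n * (Kmix * Lh / real m) + 2 * Kmix * Bh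
      < \<bar>\<Sum>k<n. h (X k \<omega>) (ypos k \<omega>)\<bar>} \<le> measure N {\<omega>\<in>space N. \<exists>n\<le>K. lam < \<bar>mart n \<omega>\<bar>}"
    by (rule N.finite_measure_mono)
  with mart_max_tail[OF lam, of K] show ?thesis by linarith
qed

end

section \<open>The predictable bracket\<close>

context walk_model
begin

lemma corr_step_continuous: "continuous_on UNIV (\<lambda>y. corr_step s j u y)"
  unfolding corr_step_def by (intro continuous_intros continuous_on_compose2[OF vcorr_continuous]) auto

lemma step_mean_continuous: "continuous_on UNIV (\<lambda>y. step_mean s i y)"
  unfolding step_mean_def
  by (intro continuous_on_sum continuous_on_scaleR continuous_on_mult continuous_on_const
      p_continuous corr_step_continuous) auto

end

context walk_process
begin

definition corr_incr :: "nat \<Rightarrow> 'w \<Rightarrow> real^'d" where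
  "corr_incr n \<omega> = corr_step (1 / real m) (X (Suc n) \<omega>) (Jn (Suc n) \<omega>) (ypos n \<omega>)"

lemma corr_incr_measurable: "corr_incr n \<in> borel_measurable N"
proof -
  have "(\<lambda>\<omega>. (\<lambda>j \<omega>. Jn (Suc n) \<omega> + vcorr P p j (ypos n \<omega> + (1 / real m) *\<^sub>R Jn (Suc n) \<omega>))
      (X (Suc n) \<omega>) \<omega>) \<in> borel_measurable N"
  proof (rule measurable_compose_countable[OF _ X_meas])
    fix j
    have "(\<lambda>\<omega>. ypos n \<omega> + (1 / real m) *\<^sub>R Jn (Suc n) \<omega>) \<in> borel_measurable N"
      using measurable_F_N[OF ypos_measurable_F] J_meas by measurable
    then show "(\<lambda>\<omega>. Jn (Suc n) \<omega> + vcorr P p j (ypos n \<omega> + (1 / real m) *\<^sub>R Jn (Suc n) \<omega>))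
        \<in> borel_measurable N"
      using J_meas borel_measurable_continuous_comp[OF _ vcorr_continuous] by (intro borel_measurable_add)
  qed
  then show ?thesis unfolding corr_incr_def corr_step_def by simp
qed

lemma Yinc_Suc: "Yinc P p m N X Jn (Suc n) \<omega> = corr_incr n \<omega> - vcond_exp N (F n) (corr_incr n) \<omega>"
proof -
  have "(\<lambda>w. Jn (Suc n) w + vcorr P p (X (Suc n) w) ((1 / real m) *\<^sub>R Spos Jn (Suc n) w)) = corr_incr n"
    by (rule ext) (simp add: corr_incr_def corr_step_def ypos_Suc[unfolded ypos_def] ypos_def)
  then show ?thesis unfolding Yinc_def Let_def by (metis diff_Suc_1)
qed

lemma cond_exp_corr_incr:
  "AE \<omega> in N. real_cond_exp N (F n) (\<lambda>w. corr_incr n w $ a) \<omega> = step_mean (1 / real m) (X n \<omega>) (ypos n \<omega>) $ a"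
proof -
  have "AE \<omega> in N. real_cond_exp N (F n)
      (\<lambda>w. (\<lambda>j u w. corr_step (1 / real m) j u (ypos n w) $ a) (X (Suc n) w) (Jn (Suc n) w) w) \<omega>
     = (\<Sum>j\<in>UNIV. \<Sum>u\<in>Vsteps. P (X n \<omega>) j * p (X n \<omega>) (ypos n \<omega>) u * corr_step (1 / real m) j u (ypos n \<omega>) $ a)"
  proof (rule cond_exp_next_step)
    fix j and u :: "real^'d"
    show "(\<lambda>w. corr_step (1 / real m) j u (ypos n w) $ a) \<in> borel_measurable (F n)"
      by (rule borel_measurable_continuous_comp[OF ypos_measurable_F])
        (intro continuous_on_component corr_step_continuous)
    fix \<omega> assume "u \<in> Vsteps"
    then show "\<bar>corr_step (1 / real m) j u (ypos n \<omega>) $ a\<bar> \<le> 1 + Kmix"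
      using component_le_norm_cart norm_corr_step_le order_trans by blast
  qed
  then show ?thesis by (simp add: corr_incr_def step_mean_def)
qed

definition centered_step_prod :: "nat \<Rightarrow> 'd \<Rightarrow> 'd \<Rightarrow> 'e \<Rightarrow> real^'d \<Rightarrow> 'w \<Rightarrow> real" where
  "centered_step_prod n a b j u \<omega> =
     (corr_step (1 / real m) j u (ypos n \<omega>) - step_mean (1 / real m) (X n \<omega>) (ypos n \<omega>)) $ a
   * (corr_step (1 / real m) j u (ypos n \<omega>) - step_mean (1 / real m) (X n \<omega>) (ypos n \<omega>)) $ b"

lemma centered_step_prod_measurable: "centered_step_prod n a b j u \<in> borel_measurable (F n)"
  unfolding centered_step_prod_def
  by (rule borel_measurable_indexed_continuous_comp[OF X_measurable_F ypos_measurable_F,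
        where f="\<lambda>i y. (corr_step (1 / real m) j u y - step_mean (1 / real m) i y) $ a
          * (corr_step (1 / real m) j u y - step_mean (1 / real m) i y) $ b"])
     (auto intro!: continuous_intros corr_step_continuous step_mean_continuous)

lemma centered_step_prod_bounded:
  "u \<in> Vsteps \<Longrightarrow> \<bar>centered_step_prod n a b j u \<omega>\<bar> \<le> (2 * (1 + Kmix)) * (2 * (1 + Kmix))"
  unfolding centered_step_prod_def abs_mult
  by (intro mult_mono order_trans[OF component_le_norm_cart norm_centered_step_le]) (auto simp: Kmix_nonneg)

lemma cond_exp_Yinc_prod:
  "AE \<omega> in N. real_cond_exp N (F n)
      (\<lambda>w. Yinc P p m N X Jn (Suc n) w $ a * Yinc P p m N X Jn (Suc n) w $ b) \<omega>
    = step_cov (1 / real m) (X n \<omega>) (ypos n \<omega>) a b"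
proof -
  interpret S: sigma_finite_subalgebra N "F n" by (rule sigma_finite_F)
  let ?Y = "\<lambda>w. Yinc P p m N X Jn (Suc n) w $ a * Yinc P p m N X Jn (Suc n) w $ b"
  let ?C = "\<lambda>w. centered_step_prod n a b (X (Suc n) w) (Jn (Suc n) w) w"
  have "AE w in N. ?Y w = ?C w"
    using cond_exp_corr_incr[of n a] cond_exp_corr_incr[of n b]
    by eventually_elim (simp add: Yinc_Suc vcond_exp_def centered_step_prod_def corr_incr_def)
  moreover have "?Y \<in> borel_measurable N"
    using corr_incr_measurable by (simp add: Yinc_Suc vcond_exp_def)
  moreover have "?C \<in> borel_measurable N"
  proof -
    have "(\<lambda>w. step_mean (1 / real m) (X n w) (ypos n w)) \<in> borel_measurable N"
      by (rule measurable_F_N[OF borel_measurable_indexed_continuous_comp[OF X_measurable_F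
            ypos_measurable_F step_mean_continuous]]) simp
    then show ?thesis
      using corr_incr_measurable unfolding centered_step_prod_def corr_incr_def[symmetric]
      by (intro borel_measurable_times borel_measurable_diff borel_measurable_vec_nth)
  qed
  ultimately have "AE \<omega> in N. real_cond_exp N (F n) ?Y \<omega> = real_cond_exp N (F n) ?C \<omega>"
    by (rule S.real_cond_exp_cong)
  moreover have "AE \<omega> in N. real_cond_exp N (F n) ?C \<omega>
    = (\<Sum>j\<in>UNIV. \<Sum>u\<in>Vsteps. P (X n \<omega>) j * p (X n \<omega>) (ypos n \<omega>) u * centered_step_prod n a b j u \<omega>)"
    by (rule cond_exp_next_step[OF centered_step_prod_measurable centered_step_prod_bounded])
  ultimately show ?thesis
    by eventually_elim (simp add: step_cov_def centered_step_prod_def)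
qed

lemma AE_cond_exp_Yinc_prod:
  "AE \<omega> in N. \<forall>n a b. real_cond_exp N (F n)
      (\<lambda>w. Yinc P p m N X Jn (Suc n) w $ a * Yinc P p m N X Jn (Suc n) w $ b) \<omega>
    = step_cov (1 / real m) (X n \<omega>) (ypos n \<omega>) a b"
  by (simp add: AE_all_countable cond_exp_Yinc_prod)

end

section \<open>The deviation estimate\<close>

lemma norm_matrix_le_entries:
  fixes A :: "real^'d^'d"
  assumes "\<And>a b. \<bar>A $ a $ b\<bar> \<le> c"
  shows "norm A \<le> real CARD('d)^2 * c"
proof -
  have "norm A \<le> (\<Sum>a\<in>UNIV. norm (A $ a))"
    unfolding norm_vec_def by (rule L2_set_le_sum) simp
  also have "\<dots> \<le> (\<Sum>a\<in>UNIV. \<Sum>b\<in>UNIV. \<bar>A $ a $ b\<bar>)"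
    by (rule sum_mono) (rule norm_le_l1_cart)
  also have "\<dots> \<le> (\<Sum>a\<in>(UNIV::'d set). \<Sum>b\<in>(UNIV::'d set). c)"
    by (intro sum_mono assms)
  finally show ?thesis by (simp add: power2_eq_square)
qed

lemma eventually_linear_le_quadratic:
  fixes a b c :: real
  assumes c: "0 < c"
  shows "eventually (\<lambda>m::nat. real m * a + b \<le> c * (real m)\<^sup>2) sequentially"
proof -
  have "((\<lambda>m::nat. a / real m + b / (real m)\<^sup>2) \<longlongrightarrow> 0 + 0) sequentially"
    by (intro tendsto_add tendsto_divide_0[OF tendsto_const] filterlim_at_top_imp_at_infinity
        filterlim_pow_at_top filterlim_real_sequentially lim_const_over_n) simp
  then have "eventually (\<lambda>m::nat. a / real m + b / (real m)\<^sup>2 < c) sequentially"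
    using c by (intro order_tendstoD(2)) auto
  with eventually_ge_at_top[of 1] show ?thesis
  proof eventually_elim
    case (elim m)
    then have "(a / real m + b / (real m)\<^sup>2) * (real m)\<^sup>2 \<le> c * (real m)\<^sup>2" by simp
    then show ?case using elim by (simp add: field_simps power2_eq_square)
  qed
qed

lemma cubic_tail_bound:
  fixes x M T c eps d :: real
  assumes x: "0 \<le> x" "x \<le> M\<^sup>2 * T" and M: "1 \<le> M" and T: "0 \<le> T" and eps: "0 < eps" and d: "0 < d"
  shows "d * ((x + 1) * (4 * c ^ 4 * (x\<^sup>2 + x)) / (eps / (4 * d) * M\<^sup>2) ^ 4)
    \<le> 1024 * d ^ 5 * c ^ 4 * (T + 1) ^ 3 / eps ^ 4 / M\<^sup>2"
proof -
  have "1 \<le> M\<^sup>2" by (rule one_le_power[OF M])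
  then have "x + 1 \<le> M\<^sup>2 * T + M\<^sup>2" using x by linarith
  then have x1: "x + 1 \<le> M\<^sup>2 * (T + 1)" by (simp add: algebra_simps)
  have "(x + 1) * (x\<^sup>2 + x) \<le> (x + 1) ^ 3"
    using x by (simp add: power2_eq_square power3_eq_cube algebra_simps)
  also have "\<dots> \<le> (M\<^sup>2 * (T + 1)) ^ 3" using x1 x by (intro power_mono) auto
  finally have cube: "(x + 1) * (x\<^sup>2 + x) \<le> (M\<^sup>2 * (T + 1)) ^ 3" .
  have "d * ((x + 1) * (4 * c ^ 4 * (x\<^sup>2 + x))) = (d * (4 * c ^ 4)) * ((x + 1) * (x\<^sup>2 + x))"
    by (simp add: algebra_simps)
  also have "\<dots> \<le> (d * (4 * c ^ 4)) * (M\<^sup>2 * (T + 1)) ^ 3"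
    using cube d by (intro mult_left_mono) auto
  finally have "d * ((x + 1) * (4 * c ^ 4 * (x\<^sup>2 + x))) / (eps / (4 * d) * M\<^sup>2) ^ 4
      \<le> (d * (4 * c ^ 4)) * (M\<^sup>2 * (T + 1)) ^ 3 / (eps / (4 * d) * M\<^sup>2) ^ 4"
    by (rule divide_right_mono) simp
  also have "\<dots> = 1024 * d ^ 5 * c ^ 4 * (T + 1) ^ 3 / eps ^ 4 / M\<^sup>2"
    using eps d M by (simp add: field_simps power2_eq_square) algebra
  finally show ?thesis by simp
qed

lemma less_SUP_floor_grid:
  fixes g :: "nat \<Rightarrow> real" and c T eps :: real
  assumes T: "0 \<le> T" and c: "0 \<le> c" and less: "eps < (SUP t\<in>{0..T}. g (nat \<lfloor>c * t\<rfloor>))"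
  obtains t where "t \<in> {0..T}" "eps < g (nat \<lfloor>c * t\<rfloor>)"
proof -
  have "nat \<lfloor>c * t\<rfloor> \<le> nat \<lfloor>c * T\<rfloor>" if "t \<in> {0..T}" for t
    using that c by (intro nat_mono floor_mono mult_left_mono) auto
  then have "(\<lambda>t. g (nat \<lfloor>c * t\<rfloor>)) ` {0..T} \<subseteq> g ` {..nat \<lfloor>c * T\<rfloor>}" by auto
  then have bdd: "bdd_above ((\<lambda>t. g (nat \<lfloor>c * t\<rfloor>)) ` {0..T})"
    by (rule bdd_above_mono[OF bdd_above_finite, rotated]) simp
  show ?thesis using less_cSUP_iff[OF _ bdd, of eps] less T that by auto
qed

lemma matrix_entry_gt_of_norm_gt:
  fixes A :: "real^'d^'d"
  assumes "eps < norm A"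
  obtains a b where "eps / real CARD('d)^2 < \<bar>A $ a $ b\<bar>"
proof (rule ccontr)
  assume "\<not> thesis"
  then have "\<bar>A $ a $ b\<bar> \<le> eps / real CARD('d)^2" for a b using that by (meson not_less)
  then have "norm A \<le> real CARD('d)^2 * (eps / real CARD('d)^2)" by (rule norm_matrix_le_entries)
  then show False using assms by simp
qed

context walk_process
begin

definition bracket_dev :: "nat \<Rightarrow> 'w \<Rightarrow> real^'d^'d" where
  "bracket_dev K \<omega> = (1 / (real m)^2) *\<^sub>R
     (\<Sum>k\<in>{1..K}. (\<chi> a b. real_cond_exp N (F (k - 1))
        (\<lambda>w. Yinc P p m N X Jn k w $ a * Yinc P p m N X Jn k w $ b) \<omega>))
    - (1 / (real m)^2) *\<^sub>R (\<Sum>k\<in>{0..<K}. abar P \<mu> p ((1 / real m) *\<^sub>R Spos Jn k \<omega>))"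

lemma bracket_minus_abar_sum:
  "bracket P p m N X Jn t \<omega> - (1 / (real m)^2) *\<^sub>R (\<Sum>k\<in>{0..<nat \<lfloor>(real m)^2 * t\<rfloor>}.
      abar P \<mu> p ((1 / real m) *\<^sub>R Spos Jn k \<omega>)) = bracket_dev (nat \<lfloor>(real m)^2 * t\<rfloor>) \<omega>"
  unfolding bracket_dev_def bracket_def by simp

definition cond_cov_eq :: "'w \<Rightarrow> bool" where
  "cond_cov_eq \<omega> \<longleftrightarrow> (\<forall>n a b. real_cond_exp N (F n)
      (\<lambda>w. Yinc P p m N X Jn (Suc n) w $ a * Yinc P p m N X Jn (Suc n) w $ b) \<omega>
    = step_cov (1 / real m) (X n \<omega>) (ypos n \<omega>) a b)"

lemma bracket_dev_nth:
  assumes "cond_cov_eq \<omega>"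
  shows "bracket_dev K \<omega> $ a $ b
    = (\<Sum>k<K. step_cov (1 / real m) (X k \<omega>) (ypos k \<omega>) a b - abar P \<mu> p (ypos k \<omega>) $ a $ b) / (real m)^2"
proof -
  have "(\<Sum>k\<in>{1..K}. (\<chi> a b. real_cond_exp N (F (k - 1))
      (\<lambda>w. Yinc P p m N X Jn k w $ a * Yinc P p m N X Jn k w $ b) \<omega>)) $ a $ b
    = (\<Sum>k<K. step_cov (1 / real m) (X k \<omega>) (ypos k \<omega>) a b)"
    unfolding One_nat_def sum.atLeast1_atMost_eq using assms by (simp add: cond_cov_eq_def)
  moreover have "(\<Sum>k\<in>{0..<K}. abar P \<mu> p ((1 / real m) *\<^sub>R Spos Jn k \<omega>)) $ a $ b
      = (\<Sum>k<K. abar P \<mu> p (ypos k \<omega>) $ a $ b)"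
    by (simp add: ypos_def atLeast0LessThan)
  ultimately show ?thesis
    unfolding bracket_dev_def by (simp add: sum_subtractf diff_divide_distrib)
qed

lemma bracket_dev_nth_le:
  assumes "cond_cov_eq \<omega>"
  shows "\<bar>bracket_dev K \<omega> $ a $ b\<bar>
    \<le> (real K * (Ccov / real m) + \<bar>\<Sum>k<K. cov_defect (X k \<omega>) (ypos k \<omega>) a b\<bar>) / (real m)^2"
proof -
  define A where "A = (\<Sum>k<K. step_cov (1 / real m) (X k \<omega>) (ypos k \<omega>) a b - step_cov 0 (X k \<omega>) (ypos k \<omega>) a b)"
  define H where "H = (\<Sum>k<K. cov_defect (X k \<omega>) (ypos k \<omega>) a b)"
  have "bracket_dev K \<omega> $ a $ b = (A + H) / (real m)^2"
    unfolding bracket_dev_nth[OF assms] A_def H_def sum.distrib[symmetric]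
    by (simp add: cov_defect_def)
  moreover have "\<bar>A\<bar> \<le> real K * (Ccov / real m)"
  proof -
    have "\<bar>A\<bar> \<le> (\<Sum>k<K. \<bar>step_cov (1 / real m) (X k \<omega>) (ypos k \<omega>) a b - step_cov 0 (X k \<omega>) (ypos k \<omega>) a b\<bar>)"
      unfolding A_def by (rule sum_abs)
    also have "\<dots> \<le> (\<Sum>k<K. Ccov * (1 / real m))" by (intro sum_mono step_cov_shift_le) simp
    finally show ?thesis by simp
  qed
  ultimately show ?thesis
    unfolding H_def[symmetric] using abs_triangle_ineq[of A H]
    by (simp add: abs_div divide_right_mono)
qed

text \<open>If the deviation exceeds \<open>\<epsilon>\<close> on a path where the conditional covariances are given by
  \<open>step_cov\<close>, then an entry of some partial sum \<open>\<Sum>_{k<n} h(\<xi>_k, S_k/m)\<close> with \<open>n \<le> m^2 T\<close>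
  exceeds \<open>\<epsilon> m^2 / (2 d^2) = 2 lam\<close>, which dominates the level in \<open>functional_tail\<close>.\<close>
lemma large_deviation_functional:
  fixes eps T Bh Lh :: real
  defines "lam \<equiv> eps / (4 * real CARD('d)^2) * (real m)^2"
  assumes good: "cond_cov_eq \<omega>" and T: "0 \<le> T" and Lh: "0 \<le> Lh"
    and small1: "real m * (real CARD('d)^2 * T * Ccov) \<le> eps / 2 * (real m)^2"
    and small2: "real m * (T * Kmix * Lh) + 2 * Kmix * Bh \<le> lam"
    and dev: "eps < (SUP t\<in>{0..T}. norm (bracket_dev (nat \<lfloor>(real m)^2 * t\<rfloor>) \<omega>))"
  shows "\<exists>a b. \<exists>n\<le>nat \<lfloor>(real m)^2 * T\<rfloor>. lam + real n * (Kmix * Lh / real m) + 2 * Kmix * Bh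
    < \<bar>\<Sum>k<n. cov_defect (X k \<omega>) (ypos k \<omega>) a b\<bar>"
proof -
  define d2 where "d2 = real CARD('d)^2"
  have d2: "0 < d2" by (simp add: d2_def)
  have m0: "0 < real m" using m_pos by simp
  obtain t where t: "t \<in> {0..T}" and t_dev: "eps < norm (bracket_dev (nat \<lfloor>(real m)^2 * t\<rfloor>) \<omega>)"
    using less_SUP_floor_grid[OF T _ dev] by auto
  define K where "K = nat \<lfloor>(real m)^2 * t\<rfloor>"
  have K_le: "K \<le> nat \<lfloor>(real m)^2 * T\<rfloor>"
    using t unfolding K_def by (intro nat_mono floor_mono mult_left_mono) auto
  have "0 \<le> (real m)^2 * T" using T by simp
  then have KT: "real K \<le> (real m)^2 * T" using K_le by linarith
  obtain a b where ab: "eps / d2 < \<bar>bracket_dev K \<omega> $ a $ b\<bar>"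
    using matrix_entry_gt_of_norm_gt[OF t_dev] unfolding K_def d2_def by blast
  define H where "H = \<bar>\<Sum>k<K. cov_defect (X k \<omega>) (ypos k \<omega>) a b\<bar>"
  have "eps / d2 < (real K * (Ccov / real m) + H) / (real m)^2"
    using ab bracket_dev_nth_le[OF good, of K a b] unfolding H_def by linarith
  then have "eps / d2 * (real m)^2 < real K * (Ccov / real m) + H"
    using m0 by (simp only: pos_less_divide_eq zero_less_power)
  moreover have "lam = eps / d2 * (real m)^2 / 4" unfolding lam_def d2_def by simp
  moreover have "real K * (Ccov / real m) \<le> (real m)^2 * T * (Ccov / real m)"
    using KT Ccov_nonneg m0 by (intro mult_right_mono) auto
  moreover have "(real m)^2 * T * (Ccov / real m) \<le> eps / d2 * (real m)^2 / 2"
    using small1 m0 d2 by (simp add: d2_def field_simps power2_eq_square)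
  ultimately have "2 * lam < H" by argo
  moreover have "real K * (Kmix * Lh / real m) \<le> (real m)^2 * T * (Kmix * Lh / real m)"
    using KT Kmix_nonneg Lh m0 by (intro mult_right_mono) auto
  moreover have "(real m)^2 * T * (Kmix * Lh / real m) = real m * (T * Kmix * Lh)"
    using m0 by (simp add: field_simps power2_eq_square)
  ultimately have "lam + real K * (Kmix * Lh / real m) + 2 * Kmix * Bh < H"
    using small2 by linarith
  with K_le show ?thesis unfolding H_def by blast
qed

lemma cov_defect_tail:
  fixes Bh Lh lam :: real and K :: nat and a b :: 'd
  assumes hB: "\<And>i y a b. \<bar>cov_defect i y a b\<bar> \<le> Bh"
    and hL: "\<And>i x y a b. \<bar>cov_defect i x a b - cov_defect i y a b\<bar> \<le> Lh * norm (x - y)"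
    and Lh: "0 \<le> Lh" and lam: "0 < lam"
  defines "E \<equiv> {\<omega>\<in>space N. \<exists>n\<le>K. lam + real n * (Kmix * Lh / real m) + 2 * Kmix * Bh
    < \<bar>\<Sum>k<n. cov_defect (X k \<omega>) (ypos k \<omega>) a b\<bar>}"
  shows "E \<in> sets N" "measure N E \<le> real (K + 1) * (4 * (2 * Kmix * Bh) ^ 4 * (real K ^ 2 + K)) / lam ^ 4"
proof -
  interpret centered_functional P \<mu> p N m X Jn "\<lambda>i y. cov_defect i y a b" Bh Lh
    by (intro centered_functional.intro walk_process_axioms centered_functional_axioms.intro
        walk_process.intro walk_model_axioms walk_model.intro ergodic_chain_axioms)
      (auto simp: cov_defect_centered hB hL Lh)
  show "E \<in> sets N" unfolding E_def by (rule functional_event_sets)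
  show "measure N E \<le> real (K + 1) * (4 * (2 * Kmix * Bh) ^ 4 * (real K ^ 2 + K)) / lam ^ 4"
    using functional_tail[OF lam, of K] unfolding E_def Cincr_def by simp
qed

lemma deviation_prob_le:
  fixes eps T Bh Lh :: real
  defines "lam \<equiv> eps / (4 * real CARD('d)^2) * (real m)^2"
  assumes eps: "0 < eps" and T: "0 \<le> T"
    and hB: "\<And>i y a b. \<bar>cov_defect i y a b\<bar> \<le> Bh"
    and hL: "\<And>i x y a b. \<bar>cov_defect i x a b - cov_defect i y a b\<bar> \<le> Lh * norm (x - y)"
    and Lh: "0 \<le> Lh"
    and small1: "real m * (real CARD('d)^2 * T * Ccov) \<le> eps / 2 * (real m)^2"
    and small2: "real m * (T * Kmix * Lh) + 2 * Kmix * Bh \<le> lam"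
  shows "measure N {\<omega> \<in> space N. eps < (SUP t\<in>{0..T}. norm (bracket_dev (nat \<lfloor>(real m)^2 * t\<rfloor>) \<omega>))}
    \<le> 1024 * (real CARD('d)^2) ^ 5 * (2 * Kmix * Bh) ^ 4 * (T + 1) ^ 3 / eps ^ 4 / (real m)^2"
proof -
  define Km where "Km = nat \<lfloor>(real m)^2 * T\<rfloor>"
  define bound where "bound = real (Km + 1) * (4 * (2 * Kmix * Bh) ^ 4 * (real Km ^ 2 + Km)) / lam ^ 4"
  define E where "E ab = {\<omega>\<in>space N. \<exists>n\<le>Km. lam + real n * (Kmix * Lh / real m) + 2 * Kmix * Bh
    < \<bar>\<Sum>k<n. cov_defect (X k \<omega>) (ypos k \<omega>) (fst ab) (snd ab)\<bar>}" for ab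
  have lam: "0 < lam" unfolding lam_def using eps m_pos by simp
  have E: "E ab \<in> sets N" "measure N (E ab) \<le> bound" for ab
  proof -
    note tail = cov_defect_tail[OF hB hL Lh lam, of Km "fst ab" "snd ab"]
    show "E ab \<in> sets N" unfolding E_def by (rule tail(1))
    show "measure N (E ab) \<le> bound" unfolding E_def bound_def by (rule tail(2))
  qed
  have "AE \<omega> in N. \<omega> \<in> {\<omega> \<in> space N. eps < (SUP t\<in>{0..T}. norm (bracket_dev (nat \<lfloor>(real m)^2 * t\<rfloor>) \<omega>))}
      \<longrightarrow> \<omega> \<in> (\<Union>ab\<in>UNIV. E ab)"
    using AE_cond_exp_Yinc_prod
  proof eventually_elim
    case (elim \<omega>)
    show ?case
      using large_deviation_functional[of \<omega> T Lh eps Bh] elim T Lh small1 small2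
      unfolding cond_cov_eq_def E_def Km_def lam_def by force
  qed
  then have "measure N {\<omega> \<in> space N. eps < (SUP t\<in>{0..T}. norm (bracket_dev (nat \<lfloor>(real m)^2 * t\<rfloor>) \<omega>))}
      \<le> measure N (\<Union>ab\<in>UNIV. E ab)"
    by (rule N.finite_measure_mono_AE) (use E in auto)
  also have "\<dots> \<le> (\<Sum>ab\<in>UNIV. measure N (E ab))"
    by (rule measure_UNION_le) (use E in auto)
  also have "\<dots> \<le> (\<Sum>ab\<in>(UNIV :: ('d \<times> 'd) set). bound)"
    by (rule sum_mono) (rule E)
  also have "\<dots> = real CARD('d)^2 * bound"
    by (simp add: power2_eq_square)
  also have "\<dots> \<le> 1024 * (real CARD('d)^2) ^ 5 * (2 * Kmix * Bh) ^ 4 * (T + 1) ^ 3 / eps ^ 4 / (real m)^2"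
  proof -
    have "0 \<le> (real m)^2 * T" using T by simp
    then have "real Km \<le> (real m)^2 * T" unfolding Km_def by linarith
    then show ?thesis
      using cubic_tail_bound[of "real Km" "real m" T eps "real CARD('d)^2" "2 * Kmix * Bh"] m_pos T eps
      unfolding bound_def lam_def by (simp add: add.commute)
  qed
  finally show ?thesis .
qed

end

locale walk_family = walk_model P \<mu> p for P :: "'e::finite \<Rightarrow> 'e \<Rightarrow> real" and \<mu>
    and p :: "'e \<Rightarrow> real^'d \<Rightarrow> real^'d \<Rightarrow> real" +
  fixes M :: "nat \<Rightarrow> 'w measure" and \<xi> :: "nat \<Rightarrow> nat \<Rightarrow> 'w \<Rightarrow> 'e" and J :: "nat \<Rightarrow> nat \<Rightarrow> 'w \<Rightarrow> real^'d"
  assumes M_prob: "\<And>m. m \<ge> 1 \<Longrightarrow> prob_space (M m)"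
    and xi_meas: "\<And>m n. m \<ge> 1 \<Longrightarrow> \<xi> m n \<in> measurable (M m) (count_space UNIV)"
    and J_meas: "\<And>m n. m \<ge> 1 \<Longrightarrow> J m n \<in> borel_measurable (M m)"
    and J_V: "\<And>m n \<omega>. m \<ge> 1 \<Longrightarrow> \<omega> \<in> space (M m) \<Longrightarrow> J m n \<omega> \<in> Vsteps"
    and trans: "\<And>m n k u. m \<ge> 1 \<Longrightarrow> u \<in> Vsteps \<Longrightarrow>
       AE \<omega> in M m. real_cond_exp (M m) (filt (M m) (\<xi> m) (J m) n)
          (indicator {w \<in> space (M m). \<xi> m (Suc n) w = k \<and> J m (Suc n) w = u}) \<omega>
        = P (\<xi> m n \<omega>) k * p (\<xi> m n \<omega>) ((1 / real m) *\<^sub>R Spos (J m) n \<omega>) u"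
begin

lemma walk_process_at: "1 \<le> m \<Longrightarrow> walk_process P \<mu> p (M m) m (\<xi> m) (J m)"
  by (intro walk_process.intro walk_model_axioms walk_process_axioms.intro M_prob xi_meas J_meas J_V trans)

lemma eventually_scale_conditions:
  assumes eps: "0 < eps"
  shows "eventually (\<lambda>m. real m * (real CARD('d)^2 * T * Ccov) \<le> eps / 2 * (real m)^2
      \<and> real m * (T * Kmix * Lh) + 2 * Kmix * Bh \<le> eps / (4 * real CARD('d)^2) * (real m)^2
      \<and> 1 \<le> m) sequentially"
proof -
  have "0 < eps / 2" "0 < eps / (4 * real CARD('d)^2)" using eps by auto
  from eventually_linear_le_quadratic[OF this(1), of "real CARD('d)^2 * T * Ccov" 0]
    eventually_linear_le_quadratic[OF this(2), of "T * Kmix * Lh" "2 * Kmix * Bh"]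
    eventually_ge_at_top[of 1]
  show ?thesis by eventually_elim simp
qed

lemma deviation_tendsto_0:
  assumes eps: "0 < eps" and T: "0 \<le> T"
  shows "(\<lambda>m. measure (M m) {\<omega> \<in> space (M m).
            (SUP t\<in>{0..T}. norm (bracket P p m (M m) (\<xi> m) (J m) t \<omega>
               - (1 / (real m)^2) *\<^sub>R (\<Sum>k\<in>{0..<nat \<lfloor>(real m)^2 * t\<rfloor>}.
                    abar P \<mu> p ((1 / real m) *\<^sub>R Spos (J m) k \<omega>)))) > eps}) \<longlonglongrightarrow> 0"
proof -
  obtain Bh Lh where hB: "\<And>i y a b. \<bar>cov_defect i y a b\<bar> \<le> Bh" and Lh: "0 \<le> Lh"
    and hL: "\<And>i x y a b. \<bar>cov_defect i x a b - cov_defect i y a b\<bar> \<le> Lh * norm (x - y)"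
    by (rule cov_defect_bounds) blast
  define C where "C = 1024 * (real CARD('d)^2) ^ 5 * (2 * Kmix * Bh) ^ 4 * (T + 1) ^ 3 / eps ^ 4"
  have ev: "eventually (\<lambda>m. measure (M m) {\<omega> \<in> space (M m).
            (SUP t\<in>{0..T}. norm (bracket P p m (M m) (\<xi> m) (J m) t \<omega>
               - (1 / (real m)^2) *\<^sub>R (\<Sum>k\<in>{0..<nat \<lfloor>(real m)^2 * t\<rfloor>}.
                    abar P \<mu> p ((1 / real m) *\<^sub>R Spos (J m) k \<omega>)))) > eps} \<le> C / (real m)^2) sequentially"
    using eventually_scale_conditions[OF eps, of T Lh Bh]
  proof eventually_elim
    case (elim m)
    interpret walk_process P \<mu> p "M m" m "\<xi> m" "J m" using elim by (intro walk_process_at) simp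
    show ?case
      using deviation_prob_le[OF eps T hB hL Lh] elim
      unfolding bracket_minus_abar_sum C_def by (simp add: mult.commute)
  qed
  have lim: "(\<lambda>m. C / (real m)^2) \<longlonglongrightarrow> 0"
    by (intro tendsto_divide_0[OF tendsto_const] filterlim_at_top_imp_at_infinity
        filterlim_pow_at_top filterlim_real_sequentially) simp
  show ?thesis by (rule tendsto_sandwich[OF _ ev tendsto_const lim]) simp
qed

end

theorem lemma4p4:
  fixes P :: "'e::finite \<Rightarrow> 'e \<Rightarrow> real"
    and \<mu> :: "'e \<Rightarrow> real"
    and p :: "'e \<Rightarrow> real^'d \<Rightarrow> real^'d \<Rightarrow> real"
    and M :: "nat \<Rightarrow> 'w measure"
    and \<xi> :: "nat \<Rightarrow> nat \<Rightarrow> 'w \<Rightarrow> 'e"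
    and J :: "nat \<Rightarrow> nat \<Rightarrow> 'w \<Rightarrow> real^'d"
    and T :: real
  assumes P_stoch: "stochastic P"
    and P_irr: "irreducible_mat P"
    and P_aper: "aperiodic_mat P"
    and mu_inv: "invariant_prob P \<mu>"
    and p_nonneg: "\<And>k y u. 0 \<le> p k y u"
    and p_sum: "\<And>k y. (\<Sum>u\<in>Vsteps. p k y u) = 1"
    and p_C2: "\<And>k u. u \<in> Vsteps \<Longrightarrow> C2_bdd_deriv (\<lambda>y. p k y u)"
    and centered: "\<And>y. (\<Sum>k\<in>UNIV. \<mu> k *\<^sub>R gdrift p k y) = 0"
    and M_prob: "\<And>m. m \<ge> 1 \<Longrightarrow> prob_space (M m)"
    and xi_meas: "\<And>m n. m \<ge> 1 \<Longrightarrow> \<xi> m n \<in> measurable (M m) (count_space UNIV)"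
    and J_meas: "\<And>m n. m \<ge> 1 \<Longrightarrow> J m n \<in> borel_measurable (M m)"
    and J_V: "\<And>m n \<omega>. m \<ge> 1 \<Longrightarrow> \<omega> \<in> space (M m) \<Longrightarrow> J m n \<omega> \<in> Vsteps"
    and trans: "\<And>m n k u. m \<ge> 1 \<Longrightarrow> u \<in> Vsteps \<Longrightarrow>
       AE \<omega> in M m. real_cond_exp (M m) (filt (M m) (\<xi> m) (J m) n)
          (indicator {w \<in> space (M m). \<xi> m (Suc n) w = k \<and> J m (Suc n) w = u}) \<omega>
        = P (\<xi> m n \<omega>) k * p (\<xi> m n \<omega>) ((1 / real m) *\<^sub>R Spos (J m) n \<omega>) u"
    and T_nonneg: "0 \<le> T"
  shows "\<forall>\<epsilon>>0. (\<lambda>m. measure (M m) {\<omega> \<in> space (M m).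
            (SUP t\<in>{0..T}. norm (bracket P p m (M m) (\<xi> m) (J m) t \<omega>
               - (1 / (real m)^2) *\<^sub>R (\<Sum>k\<in>{0..<nat \<lfloor>(real m)^2 * t\<rfloor>}.
                    abar P \<mu> p ((1 / real m) *\<^sub>R Spos (J m) k \<omega>)))) > \<epsilon>})
          \<longlonglongrightarrow> 0"
proof -
  interpret walk_family P \<mu> p M \<xi> J
    by (intro walk_family.intro walk_model.intro ergodic_chain.intro walk_model_axioms.intro
        walk_family_axioms.intro) (fact assms)+
  show ?thesis using deviation_tendsto_0 T_nonneg by blast
qed

end
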